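(* Let $\Lambda$ be a row-finite, source-free $k$-graph with no sinks, and let $\mu$ be a Radon measure on $\Lambda^\infty$ which gives rise to a $\Lambda$-projective system (with the standard prefixing and coding maps $\sigma_\lambda,\sigma^n$ and functions $f_\lambda$), with associated representation $\{T_\lambda:\lambda\in\Lambda\}$ on $L^2(\Lambda^\infty,\mu)$. Suppose $E\subseteq \Lambda^\infty$ is a minimal $\mu$-invariant subset. Then the restriction of $\{T_\lambda:\lambda\in\Lambda\}$ to $L^2(E,\mu)$ gives an irreducible representation of $C^*(\Lambda)$.
   Context: A $k$-graph is a countable small category $\Lambda$ with a functor $d:\Lambda\to\mathbb{N}^k$ with unique factorization; $\Lambda^0$ vertices, $r,s$ range/source, $v\Lambda^n$ (resp. $\Lambda^n v$) paths of degree $n$ with range (resp. source) $v$. Row-finite: $v\Lambda^n$ finite; source-free: $v\Lambda^n\ne\emptyset$; no sinks: $\Lambda^{e_i}v\ne\emptyset$ for every basis vector $e_i$ and every $v$. $C^*(\Lambda)$ is the universal $C^*$-algebra of a Cuntz–Krieger $\Lambda$-family $\{s_\lambda\}$. $\Lambda^\infty$: degree-preserving functors $\Omega_k\to\Lambda$ ($\Omega_k$ has morphisms $(m,n)$, $m\le n$ in $\mathbb{N}^k$); cylinder sets $Z(\lambda)$ (infinite paths beginning with $\lambda$) generate the topology and Borel structure; standard coding maps $\sigma^n(x)(p,q)=x(p+n,q+n)$, prefixing maps $\sigma_\lambda(x)=\lambda x$ on $Z(s(\lambda))$. A $\Lambda$-projective system on $(\Lambda^\infty,\mu)$ with these maps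 means: for each $n$, $\{\sigma_\lambda: d(\lambda)=n\}$ is a semibranching function system with coding map $\sigma^n$ (in particular $0<\mu(Z(s(\lambda)))<\infty$, $\mu(Z(\lambda))<\infty$, and $d(\mu\circ\sigma_\lambda)/d\mu>0$ a.e.), together with $f_\lambda\in L^2$ satisfying $0\ne d(\mu\circ\sigma_\lambda^{-1})/d\mu=|f_\lambda|^2$ and $f_\lambda(f_\nu\circ\sigma^{d(\lambda)})=f_{\lambda\nu}$; then $T_\lambda f=f_\lambda\cdot(f\circ\sigma^{d(\lambda)})$ is a Cuntz–Krieger family. A Borel set $A\subseteq\Lambda^\infty$ of nonzero measure is $\mu$-invariant if $\mu(A\,\Delta\,(\sigma^n)^{-1}(A))=0$ for all $n\in\mathbb{N}^k$. A $\mu$-invariant $E$ is minimal $\mu$-invariant if there is no $\mu$-invariant subset $A\subseteq E$ with $\mu(A\,\Delta\,E)\ne0$. *)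

theory Defs
  imports "HOL-Probability.Probability" "HOL-Library.Function_Algebras"
begin

text \<open>A k-graph is encoded by its set of morphisms
  (the type 'p), a degree map d, range and source maps r, s (vertices = morphisms of degree 0,
  i.e. the identity morphisms) and composition cmp (cmp l m defined when s l = r m).\<close>

definition kgraph ::
  "('p \<Rightarrow> ('k::finite \<Rightarrow> nat)) \<Rightarrow> ('p \<Rightarrow> 'p) \<Rightarrow> ('p \<Rightarrow> 'p) \<Rightarrow> ('p \<Rightarrow> 'p \<Rightarrow> 'p) \<Rightarrow> bool" where
  "kgraph d r s cmp \<longleftrightarrow>
     countable (UNIV :: 'p set) \<and>
     (\<forall>l. d (r l) = 0 \<and> d (s l) = 0) \<and>
     (\<forall>v. d v = 0 \<longrightarrow> r v = v \<and> s v = v) \<and>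
     (\<forall>l. cmp (r l) l = l \<and> cmp l (s l) = l) \<and>
     (\<forall>l m. s l = r m \<longrightarrow> r (cmp l m) = r l \<and> s (cmp l m) = s m \<and> d (cmp l m) = d l + d m) \<and>
     (\<forall>l m n. s l = r m \<and> s m = r n \<longrightarrow> cmp (cmp l m) n = cmp l (cmp m n)) \<and>
     (\<forall>l m n. d l = m + n \<longrightarrow>
        (\<exists>!p. d (fst p) = m \<and> d (snd p) = n \<and> s (fst p) = r (snd p) \<and> cmp (fst p) (snd p) = l))"

definition unit_deg :: "'k \<Rightarrow> ('k \<Rightarrow> nat)" where
  "unit_deg i = (\<lambda>j. if j = i then 1 else 0)"

definition row_finite :: "('p \<Rightarrow> ('k \<Rightarrow> nat)) \<Rightarrow> ('p \<Rightarrow> 'p) \<Rightarrow> bool" where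
  "row_finite d r \<longleftrightarrow> (\<forall>v n. d v = 0 \<longrightarrow> finite {l. r l = v \<and> d l = n})"

definition source_free :: "('p \<Rightarrow> ('k \<Rightarrow> nat)) \<Rightarrow> ('p \<Rightarrow> 'p) \<Rightarrow> bool" where
  "source_free d r \<longleftrightarrow> (\<forall>v n. d v = 0 \<longrightarrow> (\<exists>l. r l = v \<and> d l = n))"

definition no_sinks :: "('p \<Rightarrow> ('k \<Rightarrow> nat)) \<Rightarrow> ('p \<Rightarrow> 'p) \<Rightarrow> bool" where
  "no_sinks d s \<longleftrightarrow> (\<forall>v i. d v = 0 \<longrightarrow> (\<exists>l. s l = v \<and> d l = unit_deg i))"

text \<open>Infinite paths: degree-preserving functors from Omega_k. A path x is represented by
  x m n = image of the morphism (m,n) for m \<le> n (value undefined otherwise).\<close>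

definition infpaths ::
  "('p \<Rightarrow> ('k \<Rightarrow> nat)) \<Rightarrow> ('p \<Rightarrow> 'p) \<Rightarrow> ('p \<Rightarrow> 'p) \<Rightarrow> ('p \<Rightarrow> 'p \<Rightarrow> 'p)
     \<Rightarrow> (('k \<Rightarrow> nat) \<Rightarrow> ('k \<Rightarrow> nat) \<Rightarrow> 'p) set" where
  "infpaths d r s cmp =
     {x. (\<forall>m n. \<not> m \<le> n \<longrightarrow> x m n = undefined) \<and>
         (\<forall>m n. m \<le> n \<longrightarrow> d (x m n) + m = n) \<and>
         (\<forall>m n p. m \<le> n \<and> n \<le> p \<longrightarrow> s (x m n) = r (x n p) \<and> cmp (x m n) (x n p) = x m p)}"

definition cyl ::
  "('p \<Rightarrow> ('k \<Rightarrow> nat)) \<Rightarrow> ('p \<Rightarrow> 'p) \<Rightarrow> ('p \<Rightarrow> 'p) \<Rightarrow> ('p \<Rightarrow> 'p \<Rightarrow> 'p) \<Rightarrow> 'p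
     \<Rightarrow> (('k \<Rightarrow> nat) \<Rightarrow> ('k \<Rightarrow> nat) \<Rightarrow> 'p) set" where
  "cyl d r s cmp l = {x \<in> infpaths d r s cmp. x 0 (d l) = l}"

definition shift :: "('k \<Rightarrow> nat) \<Rightarrow> (('k \<Rightarrow> nat) \<Rightarrow> ('k \<Rightarrow> nat) \<Rightarrow> 'p) \<Rightarrow> (('k \<Rightarrow> nat) \<Rightarrow> ('k \<Rightarrow> nat) \<Rightarrow> 'p)" where
  "shift n x = (\<lambda>p q. x (p + n) (q + n))"

definition prefix ::
  "('p \<Rightarrow> ('k \<Rightarrow> nat)) \<Rightarrow> ('p \<Rightarrow> 'p) \<Rightarrow> ('p \<Rightarrow> 'p) \<Rightarrow> ('p \<Rightarrow> 'p \<Rightarrow> 'p) \<Rightarrow> 'p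
     \<Rightarrow> (('k \<Rightarrow> nat) \<Rightarrow> ('k \<Rightarrow> nat) \<Rightarrow> 'p) \<Rightarrow> (('k \<Rightarrow> nat) \<Rightarrow> ('k \<Rightarrow> nat) \<Rightarrow> 'p)" where
  "prefix d r s cmp l x =
     (THE y. y \<in> infpaths d r s cmp \<and> y 0 (d l) = l \<and> shift (d l) y = x)"

definition semibranching ::
  "'a measure \<Rightarrow> 'i set \<Rightarrow> ('i \<Rightarrow> 'a set) \<Rightarrow> ('i \<Rightarrow> 'a \<Rightarrow> 'a) \<Rightarrow> ('a \<Rightarrow> 'a) \<Rightarrow> bool" where
  "semibranching M I D tau cod \<longleftrightarrow>
     countable I \<and>
     cod \<in> measurable M M \<and>
     (\<forall>i\<in>I.
        D i \<in> sets M \<and> 0 < emeasure M (D i) \<and> emeasure M (D i) < \<infinity> \<and>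
        tau i \<in> measurable (restrict_space M (D i)) M \<and>
        (\<forall>A\<in>sets M. A \<subseteq> D i \<longrightarrow> tau i ` A \<in> sets M) \<and>
        emeasure M (tau i ` D i) < \<infinity> \<and>
        (\<forall>x\<in>D i. cod (tau i x) = x) \<and>
        (\<exists>h\<in>borel_measurable M. (\<forall>x. 0 \<le> h x) \<and> (AE x in M. x \<in> D i \<longrightarrow> 0 < h x) \<and>
           (\<forall>A\<in>sets M. A \<subseteq> D i \<longrightarrow>
               emeasure M (tau i ` A) = (\<integral>\<^sup>+x\<in>A. ennreal (h x) \<partial>M)))) \<and>
     emeasure M (space M - (\<Union>i\<in>I. tau i ` D i)) = 0 \<and>
     (\<forall>i\<in>I. \<forall>j\<in>I. i \<noteq> j \<longrightarrow> emeasure M (tau i ` D i \<inter> tau j ` D j) = 0)"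

definition projective_system ::
  "('p \<Rightarrow> ('k \<Rightarrow> nat)) \<Rightarrow> ('p \<Rightarrow> 'p) \<Rightarrow> ('p \<Rightarrow> 'p) \<Rightarrow> ('p \<Rightarrow> 'p \<Rightarrow> 'p)
     \<Rightarrow> (('k \<Rightarrow> nat) \<Rightarrow> ('k \<Rightarrow> nat) \<Rightarrow> 'p) measure
     \<Rightarrow> ('p \<Rightarrow> (('k \<Rightarrow> nat) \<Rightarrow> ('k \<Rightarrow> nat) \<Rightarrow> 'p) \<Rightarrow> complex) \<Rightarrow> bool" where
  "projective_system d r s cmp M f \<longleftrightarrow>
     (\<forall>n. semibranching M {l. d l = n} (\<lambda>l. cyl d r s cmp (s l)) (prefix d r s cmp) (shift n)) \<and>
     (\<forall>l. f l \<in> borel_measurable M \<and> integrable M (\<lambda>x. (cmod (f l x))\<^sup>2) \<and>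
          \<not> (AE x in M. f l x = 0) \<and>
          (\<forall>A\<in>sets M. emeasure M (prefix d r s cmp l -` A \<inter> cyl d r s cmp (s l))
                         = (\<integral>\<^sup>+x\<in>A. ennreal ((cmod (f l x))\<^sup>2) \<partial>M))) \<and>
     (\<forall>l m. s l = r m \<longrightarrow> (AE x in M. f (cmp l m) x = f l x * f m (shift (d l) x)))"

definition Top ::
  "('p \<Rightarrow> ('k \<Rightarrow> nat)) \<Rightarrow> ('p \<Rightarrow> (('k \<Rightarrow> nat) \<Rightarrow> ('k \<Rightarrow> nat) \<Rightarrow> 'p) \<Rightarrow> complex) \<Rightarrow> 'p
     \<Rightarrow> ((('k \<Rightarrow> nat) \<Rightarrow> ('k \<Rightarrow> nat) \<Rightarrow> 'p) \<Rightarrow> complex)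
     \<Rightarrow> ((('k \<Rightarrow> nat) \<Rightarrow> ('k \<Rightarrow> nat) \<Rightarrow> 'p) \<Rightarrow> complex)" where
  "Top d f l g = (\<lambda>x. f l x * g (shift (d l) x))"

text \<open>Square-integrable functions (elements of L^2 are represented by functions;
  a.e.-equal functions represent the same vector).\<close>
definition L2 :: "'a measure \<Rightarrow> ('a \<Rightarrow> complex) set" where
  "L2 M = {g \<in> borel_measurable M. integrable M (\<lambda>x. (cmod (g x))\<^sup>2)}"

definition L2_on :: "'a measure \<Rightarrow> 'a set \<Rightarrow> ('a \<Rightarrow> complex) set" where
  "L2_on M E = {g \<in> L2 M. AE x in M. x \<notin> E \<longrightarrow> g x = 0}"

definition l2inner :: "'a measure \<Rightarrow> ('a \<Rightarrow> complex) \<Rightarrow> ('a \<Rightarrow> complex) \<Rightarrow> complex" where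
  "l2inner M g h = (\<integral>x. g x * cnj (h x) \<partial>M)"

definition closed_subspace :: "'a measure \<Rightarrow> ('a \<Rightarrow> complex) set \<Rightarrow> bool" where
  "closed_subspace M V \<longleftrightarrow>
     V \<subseteq> L2 M \<and> (\<lambda>x. 0) \<in> V \<and>
     (\<forall>g\<in>V. \<forall>h\<in>V. (\<lambda>x. g x + h x) \<in> V) \<and>
     (\<forall>c. \<forall>g\<in>V. (\<lambda>x. c * g x) \<in> V) \<and>
     (\<forall>G g. (\<forall>n::nat. G n \<in> V) \<and> g \<in> L2 M \<and>
            (\<lambda>n. \<integral>x. (cmod (G n x - g x))\<^sup>2 \<partial>M) \<longlonglongrightarrow> 0 \<longrightarrow> g \<in> V)"

text \<open>V is invariant under the adjoint of the operator T acting on the Hilbert space H: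
  for every g in V, the vector T^* g (characterised by <T u, g> = <u, T^* g> for all u in H)
  lies in V.\<close>
definition adj_invariant ::
  "'a measure \<Rightarrow> ('a \<Rightarrow> complex) set \<Rightarrow> (('a \<Rightarrow> complex) \<Rightarrow> ('a \<Rightarrow> complex))
     \<Rightarrow> ('a \<Rightarrow> complex) set \<Rightarrow> bool" where
  "adj_invariant M H T V \<longleftrightarrow>
     (\<forall>g\<in>V. \<exists>h\<in>V. \<forall>u\<in>H. l2inner M (T u) g = l2inner M u h)"

definition mu_invariant :: "(('k \<Rightarrow> nat) \<Rightarrow> ('k \<Rightarrow> nat) \<Rightarrow> 'p) measure
     \<Rightarrow> (('k \<Rightarrow> nat) \<Rightarrow> ('k \<Rightarrow> nat) \<Rightarrow> 'p) set \<Rightarrow> bool" where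
  "mu_invariant M A \<longleftrightarrow>
     A \<in> sets M \<and> emeasure M A \<noteq> 0 \<and>
     (\<forall>n. emeasure M ((A - (shift n -` A \<inter> space M)) \<union> ((shift n -` A \<inter> space M) - A)) = 0)"

definition minimal_mu_invariant :: "(('k \<Rightarrow> nat) \<Rightarrow> ('k \<Rightarrow> nat) \<Rightarrow> 'p) measure
     \<Rightarrow> (('k \<Rightarrow> nat) \<Rightarrow> ('k \<Rightarrow> nat) \<Rightarrow> 'p) set \<Rightarrow> bool" where
  "minimal_mu_invariant M E \<longleftrightarrow>
     mu_invariant M E \<and>
     \<not> (\<exists>A. mu_invariant M A \<and> A \<subseteq> E \<and> emeasure M ((A - E) \<union> (E - A)) \<noteq> 0)"

end

theory Submission
  imports Defs
begin

text \<open>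
  The operator T_\<lambda> has an explicit adjoint T_\<lambda>^*, obtained by changing variables along the
  prefixing map \<sigma>_\<lambda>. Then T_\<lambda> T_\<lambda>^* and T_\<lambda>^* T_\<lambda> are the multiplications by the indicators of
  the range \<sigma>_\<lambda>(Z(s \<lambda>)) and of the domain Z(s \<lambda>), and the range fills Z(\<lambda>) up to a null set.
  Hence a closed subspace V of L^2(E) invariant under all T_\<lambda> and T_\<lambda>^* is invariant under
  multiplication by the indicators of cylinder sets, hence of all Borel sets, and therefore
  (\<mu> being \<sigma>-finite) V = L^2(F) for a Borel set F \<subseteq> E. Invariance of L^2(F) under T_\<lambda> and
  T_\<lambda>^* for all \<lambda> of degree n says exactly that F and (\<sigma>^n)^-1(F) agree up to null sets, so by
  minimality of E either F is null (V = 0) or F = E a.e. (V = L^2(E)). The same correspondence,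
  read backwards, shows that L^2(E) is invariant under T_\<lambda> and T_\<lambda>^*.
\<close>

section \<open>Segments of paths in a k-graph\<close>

instance "fun" :: (type, comm_monoid_diff) comm_monoid_diff
  by standard (simp add: fun_eq_iff)

instance "fun" :: (type, "{dioid, ordered_cancel_comm_monoid_diff}") ordered_cancel_comm_monoid_diff ..

lemma le_add_left [simp]: "(q::'a::canonically_ordered_monoid_add) \<le> n + q"
  and le_add_right [simp]: "(q::'a::canonically_ordered_monoid_add) \<le> q + n"
  by (simp_all add: add_increasing add_increasing2)

locale k_graph =
  fixes d :: "'p \<Rightarrow> ('k::finite \<Rightarrow> nat)" and r s :: "'p \<Rightarrow> 'p" and cmp :: "'p \<Rightarrow> 'p \<Rightarrow> 'p"
  assumes kgraph: "kgraph d r s cmp"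
begin

lemma countable_morphisms: "countable (UNIV :: 'p set)"
  using kgraph by (simp add: kgraph_def)

lemma deg_range [simp]: "d (r l) = 0" and deg_source [simp]: "d (s l) = 0"
  using kgraph by (auto simp: kgraph_def)

lemma source_vertex: "d v = 0 \<Longrightarrow> s v = v"
  using kgraph by (auto simp: kgraph_def)

lemma comp_range_left [simp]: "cmp (r l) l = l" and comp_source_right [simp]: "cmp l (s l) = l"
  using kgraph by (auto simp: kgraph_def)

lemma
  assumes "s l = r m"
  shows range_comp [simp]: "r (cmp l m) = r l" and source_comp [simp]: "s (cmp l m) = s m"
    and deg_comp [simp]: "d (cmp l m) = d l + d m"
  using kgraph assms by (auto simp: kgraph_def)

lemma comp_assoc: "s l = r m \<Longrightarrow> s m = r n \<Longrightarrow> cmp (cmp l m) n = cmp l (cmp m n)"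
  using kgraph unfolding kgraph_def by blast

lemma unique_factorization:
  "d l = m + n \<Longrightarrow> \<exists>!p. d (fst p) = m \<and> d (snd p) = n \<and> s (fst p) = r (snd p) \<and> cmp (fst p) (snd p) = l"
  using kgraph unfolding kgraph_def by blast

lemma factorization_unique:
  assumes "s a = r b" "s a' = r b'" "cmp a b = cmp a' b'" "d a = d a'" "d b = d b'"
  shows "a = a' \<and> b = b'"
proof -
  have "d (cmp a b) = d a + d b" using assms(1) by simp
  from unique_factorization[OF this] obtain p where
    "\<And>q. d (fst q) = d a \<and> d (snd q) = d b \<and> s (fst q) = r (snd q) \<and> cmp (fst q) (snd q) = cmp a b
      \<Longrightarrow> q = p"
    by blast
  then have "(a, b) = p" "(a', b') = p" using assms by auto
  then have "(a, b) = (a', b')" by simp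
  then show ?thesis by simp
qed

lemma factorization_exists:
  assumes "m \<le> d c"
  obtains a b where "s a = r b" "d a = m" "cmp a b = c"
proof -
  have "d c = m + (d c - m)" using assms by (simp add: ordered_cancel_comm_monoid_diff_class.add_diff_inverse)
  from ex1_implies_ex[OF unique_factorization[OF this]] show ?thesis
    using that by auto
qed

definition segment :: "'p \<Rightarrow> ('k \<Rightarrow> nat) \<Rightarrow> ('k \<Rightarrow> nat) \<Rightarrow> 'p" where
  "segment c p q =
     (THE b. \<exists>a e. s a = r b \<and> s b = r e \<and> d a = p \<and> d a + d b = q \<and> cmp a (cmp b e) = c)"

lemma segment_eqI:
  assumes "s a = r b" "s b = r e" "c = cmp a (cmp b e)" "p = d a" "q = d a + d b"
  shows "segment c p q = b"
  unfolding segment_def assms(3-5)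
proof (rule the_equality)
  fix b' assume "\<exists>a' e'. s a' = r b' \<and> s b' = r e' \<and> d a' = d a \<and> d a' + d b' = d a + d b \<and>
    cmp a' (cmp b' e') = cmp a (cmp b e)"
  then obtain a' e' where h: "s a' = r b'" "s b' = r e'" "d a' = d a" "d b' = d b"
    "cmp a' (cmp b' e') = cmp a (cmp b e)"
    by auto
  have "d (cmp a' (cmp b' e')) = d (cmp a (cmp b e))"
    using h(5) by simp
  then have de: "d e' = d e"
    using assms h(1-4) by simp
  then have "cmp b' e' = cmp b e"
    using factorization_unique[of a' "cmp b' e'" a "cmp b e"] assms h by simp
  then show "b' = b"
    using factorization_unique[of b' e' b e] assms h de by simp
qed (use assms in blast)

lemma segment_split:
  assumes "p \<le> q" "q \<le> d c"
  obtains a b e where "segment c p q = b" "s a = r b" "s b = r e" "d a = p" "d b = q - p"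
    "c = cmp a (cmp b e)"
proof -
  have "p \<le> d c" using assms by (rule order_trans)
  then obtain a c' where a: "s a = r c'" "d a = p" "cmp a c' = c"
    by (rule factorization_exists)
  have "q \<le> p + d c'"
    using assms a(1,2) a(3)[symmetric] by simp
  then have "q - p \<le> d c'"
    unfolding le_fun_def by (simp add: le_diff_conv add.commute)
  then obtain b e where b: "s b = r e" "d b = q - p" "cmp b e = c'"
    by (rule factorization_exists)
  have c: "c = cmp a (cmp b e)" and sab: "s a = r b"
    using a b by auto
  have "segment c p q = b"
    using assms(1) a(2) b(2)
    by (intro segment_eqI[OF sab b(1) c]) (simp_all add: ordered_cancel_comm_monoid_diff_class.add_diff_inverse)
  then show ?thesis
    using that sab a(2) b(1,2) c by blast
qed

lemma deg_segment: "p \<le> q \<Longrightarrow> q \<le> d c \<Longrightarrow> d (segment c p q) = q - p"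
  by (rule segment_split) auto

lemma segment_comp_right:
  assumes "s c = r e" "p \<le> q" "q \<le> d c"
  shows "segment (cmp c e) p q = segment c p q"
proof -
  obtain a b e' where h: "segment c p q = b" "s a = r b" "s b = r e'" "d a = p" "d b = q - p"
    "c = cmp a (cmp b e')"
    by (rule segment_split[OF assms(2,3)])
  have se': "s e' = r e"
    using assms(1) h(2,3,6) by simp
  have "cmp c e = cmp a (cmp b (cmp e' e))"
    using h(2,3,6) se' by (simp add: comp_assoc)
  then have "segment (cmp c e) p q = b"
    using h(2-5) se' assms(2)
    by (intro segment_eqI[of a b "cmp e' e"]) (simp_all add: ordered_cancel_comm_monoid_diff_class.add_diff_inverse)
  then show ?thesis
    using h(1) by simp
qed

lemma segment_comp:
  assumes "p \<le> q" "q \<le> t" "t \<le> d c"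
  shows "s (segment c p q) = r (segment c q t) \<and> cmp (segment c p q) (segment c q t) = segment c p t"
proof -
  have "p \<le> t" using assms(1,2) by (rule order_trans)
  then obtain a b e where h: "segment c p t = b" "s a = r b" "s b = r e" "d a = p" "d b = t - p"
    "c = cmp a (cmp b e)"
    using assms(3) by (rule segment_split)
  have "q - p \<le> d b"
    using assms(2) h(5) unfolding le_fun_def by (simp add: diff_le_mono)
  then obtain b1 b2 where b: "s b1 = r b2" "d b1 = q - p" "cmp b1 b2 = b"
    by (rule factorization_exists)
  have q: "q = d a + d b1"
    using assms(1) h(4) b(2) by (simp add: ordered_cancel_comm_monoid_diff_class.add_diff_inverse)
  have "t = p + (t - p)"
    using \<open>p \<le> t\<close> by (simp add: ordered_cancel_comm_monoid_diff_class.add_diff_inverse)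
  also have "\<dots> = d a + d (cmp b1 b2)"
    using h(4,5) b(3) by simp
  finally have t: "t = d a + d b1 + d b2"
    using b(1) by (simp add: add.assoc)
  have sb2: "s b2 = r e" and sab1: "s a = r b1"
    using h(2,3) b by auto
  have "segment c p q = b1"
    using b(1) sb2 sab1 h(4,6) b(3) q by (intro segment_eqI[of a b1 "cmp b2 e"]) (auto simp: comp_assoc)
  moreover have "segment c q t = b2"
    using b(1) sb2 h(6) b(3) q t sab1
    by (intro segment_eqI[of "cmp a b1" b2 e]) (auto simp: comp_assoc)
  ultimately show ?thesis
    using h(1) b by simp
qed

lemma segment_comp_left:
  assumes "s a = r c" "p \<le> q" "q \<le> d c"
  shows "segment (cmp a c) (d a + p) (d a + q) = segment c p q"
proof -
  obtain a' b e where h: "segment c p q = b" "s a' = r b" "s b = r e" "d a' = p" "d b = q - p"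
    "c = cmp a' (cmp b e)"
    by (rule segment_split[OF assms(2,3)])
  have saa': "s a = r a'"
    using assms(1) h(2,3,6) by simp
  have "segment (cmp a c) (d a + p) (d a + q) = b"
    using h(2-6) saa' assms(2)
    by (intro segment_eqI[of "cmp a a'" b e])
      (simp_all add: comp_assoc add.assoc ordered_cancel_comm_monoid_diff_class.add_diff_inverse)
  then show ?thesis
    using h(1) by simp
qed

lemma segment_first:
  assumes "s a = r c"
  shows "segment (cmp a c) 0 (d a) = a"
proof (rule segment_eqI[of "r a" a c])
  show "cmp a c = cmp (r a) (cmp a c)"
    using comp_range_left[of "cmp a c"] assms by simp
qed (simp_all add: source_vertex assms)

lemma
  assumes "x \<in> infpaths d r s cmp" "m \<le> n"
  shows infpath_deg: "d (x m n) = n - m"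
proof -
  have "d (x m n) + m = n" using assms unfolding infpaths_def by blast
  then show ?thesis using add_diff_cancel_right'[of "d (x m n)" m] by simp
qed

lemma
  assumes "x \<in> infpaths d r s cmp" "m \<le> n" "n \<le> p"
  shows infpath_source_range: "s (x m n) = r (x n p)" and infpath_comp: "cmp (x m n) (x n p) = x m p"
  using assms unfolding infpaths_def by blast+

lemma infpath_undefined: "x \<in> infpaths d r s cmp \<Longrightarrow> \<not> m \<le> n \<Longrightarrow> x m n = undefined"
  unfolding infpaths_def by blast

lemma infpath_segment:
  assumes x: "x \<in> infpaths d r s cmp" and "p \<le> q" "q \<le> t"
  shows "segment (x 0 t) p q = x p q"
proof (rule segment_eqI[of "x 0 p" "x p q" "x q t"])
  have "p \<le> t" using assms(2,3) by (rule order_trans)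
  then show "x 0 t = cmp (x 0 p) (cmp (x p q) (x q t))"
    using assms by (simp add: infpath_comp)
qed (use assms in \<open>simp_all add: infpath_source_range infpath_deg ordered_cancel_comm_monoid_diff_class.add_diff_inverse\<close>)

text \<open>An explicit construction of the path \<lambda>x, showing that the definite description in
  the definition of prefix is well defined.\<close>
definition prepend ::
  "'p \<Rightarrow> (('k \<Rightarrow> nat) \<Rightarrow> ('k \<Rightarrow> nat) \<Rightarrow> 'p) \<Rightarrow> ('k \<Rightarrow> nat) \<Rightarrow> ('k \<Rightarrow> nat) \<Rightarrow> 'p" where
  "prepend l y = (\<lambda>p q. if p \<le> q then segment (cmp l (y 0 q)) p q else undefined)"

context
  fixes l y
  assumes y: "y \<in> infpaths d r s cmp" and y0: "y 0 0 = s l"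
begin

lemma source_eq_range_path: "s l = r (y 0 q)"
  using infpath_source_range[OF y, of 0 0 q] y0 source_vertex[of "s l"] by simp

lemma prepend_initial: "prepend l y 0 (d l) = l"
  unfolding prepend_def using segment_first[OF source_eq_range_path] by simp

lemma segment_comp_path_le:
  assumes "p \<le> q" "q \<le> t"
  shows "segment (cmp l (y 0 t)) p q = segment (cmp l (y 0 q)) p q"
proof -
  have "cmp l (y 0 t) = cmp (cmp l (y 0 q)) (y q t)"
    using assms(2) infpath_comp[OF y, of 0 q t] infpath_source_range[OF y, of 0 q t]
      source_eq_range_path[of q]
    by (simp add: comp_assoc)
  moreover have "s (cmp l (y 0 q)) = r (y q t)"
    using assms(2) infpath_source_range[OF y, of 0 q t] source_eq_range_path[of q] by simp
  moreover have "q \<le> d (cmp l (y 0 q))"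
    using source_eq_range_path[of q] by (simp add: infpath_deg[OF y])
  ultimately show ?thesis
    using assms(1) by (simp add: segment_comp_right)
qed

lemma prepend_infpath: "prepend l y \<in> infpaths d r s cmp"
  unfolding infpaths_def
proof (intro CollectI conjI allI impI)
  fix p q t :: "'k \<Rightarrow> nat"
  show "prepend l y p q = undefined" if "\<not> p \<le> q"
    using that by (simp add: prepend_def)
  show "d (prepend l y p q) + p = q" if "p \<le> q"
    using that source_eq_range_path[of q]
    by (simp add: prepend_def deg_segment infpath_deg[OF y]
      ordered_cancel_comm_monoid_diff_class.diff_add)
  assume pqt: "p \<le> q \<and> q \<le> t"
  then have "s (segment (cmp l (y 0 t)) p q) = r (segment (cmp l (y 0 t)) q t) \<and>
      cmp (segment (cmp l (y 0 t)) p q) (segment (cmp l (y 0 t)) q t) = segment (cmp l (y 0 t)) p t"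
    using source_eq_range_path[of t] by (intro segment_comp) (simp_all add: infpath_deg[OF y])
  then show "s (prepend l y p q) = r (prepend l y q t)"
    and "cmp (prepend l y p q) (prepend l y q t) = prepend l y p t"
    using pqt order_trans[of p q t] segment_comp_path_le[of p q t]
    by (simp_all add: prepend_def)
qed

lemma shift_prepend: "shift (d l) (prepend l y) = y"
proof (intro ext)
  fix p q :: "'k \<Rightarrow> nat"
  show "shift (d l) (prepend l y) p q = y p q"
  proof (cases "p \<le> q")
    case True
    have "shift (d l) (prepend l y) p q = segment (cmp l (y 0 (q + d l))) (d l + p) (d l + q)"
      using True by (simp add: shift_def prepend_def add.commute add_right_mono)
    also have "\<dots> = segment (y 0 (q + d l)) p q"
      using True source_eq_range_path by (simp add: segment_comp_left infpath_deg[OF y])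
    also have "\<dots> = y p q"
      using True by (simp add: infpath_segment[OF y])
    finally show ?thesis .
  next
    case False
    then have "\<not> p + d l \<le> q + d l"
      by simp
    then show ?thesis
      using False by (simp add: shift_def prepend_def infpath_undefined[OF y])
  qed
qed

lemma prepend_unique:
  assumes z: "z \<in> infpaths d r s cmp" "z 0 (d l) = l" "shift (d l) z = y"
  shows "z = prepend l y"
proof (intro ext)
  fix p q :: "'k \<Rightarrow> nat"
  show "z p q = prepend l y p q"
  proof (cases "p \<le> q")
    case True
    have "z (d l) (q + d l) = y 0 q"
      using fun_cong[OF fun_cong[OF z(3), of 0], of q] by (simp add: shift_def)
    then have "z 0 (q + d l) = cmp l (y 0 q)"
      using infpath_comp[OF z(1), of 0 "d l" "q + d l"] z(2) by simp
    then show ?thesis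
      using True infpath_segment[OF z(1) True, of "q + d l"] by (simp add: prepend_def)
  next
    case False
    then show ?thesis
      by (simp add: prepend_def infpath_undefined[OF z(1)])
  qed
qed

end

lemma
  assumes "y \<in> cyl d r s cmp (s l)"
  shows prefix_in_cyl: "prefix d r s cmp l y \<in> cyl d r s cmp l"
    and shift_prefix: "shift (d l) (prefix d r s cmp l y) = y"
proof -
  have y: "y \<in> infpaths d r s cmp" "y 0 0 = s l"
    using assms by (simp_all add: cyl_def)
  have "prefix d r s cmp l y = prepend l y"
    unfolding prefix_def
    by (rule the_equality) (use y prepend_infpath prepend_initial shift_prepend prepend_unique in blast)+
  then show "prefix d r s cmp l y \<in> cyl d r s cmp l" "shift (d l) (prefix d r s cmp l y) = y"
    using y by (simp_all add: cyl_def prepend_infpath prepend_initial shift_prepend)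
qed

lemma infpath_in_cyl_vertex: "x \<in> infpaths d r s cmp \<Longrightarrow> x \<in> cyl d r s cmp (x 0 0)"
  by (simp add: cyl_def infpath_deg)

lemma cyl_eq_deg_unique: "x \<in> cyl d r s cmp l \<Longrightarrow> x \<in> cyl d r s cmp l' \<Longrightarrow> d l = d l' \<Longrightarrow> l = l'"
  unfolding cyl_def by auto

end

section \<open>Square-integrable functions\<close>

lemma L2_iff_nn_integral:
  "g \<in> L2 M \<longleftrightarrow> g \<in> borel_measurable M \<and> (\<integral>\<^sup>+x. ennreal ((cmod (g x))\<^sup>2) \<partial>M) < \<infinity>"
  unfolding L2_def by (auto simp: integrable_iff_bounded)

lemma L2_measurable [measurable_dest]: "g \<in> L2 M \<Longrightarrow> g \<in> borel_measurable M"
  unfolding L2_def by auto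

lemma L2_integrable: "g \<in> L2 M \<Longrightarrow> integrable M (\<lambda>x. (cmod (g x))\<^sup>2)"
  unfolding L2_def by auto

lemma L2_dominated:
  assumes g: "g \<in> L2 M" and h[measurable]: "h \<in> borel_measurable M"
    and bound: "AE x in M. cmod (h x) \<le> K * cmod (g x)"
  shows "h \<in> L2 M"
proof -
  have "AE x in M. norm ((cmod (h x))\<^sup>2) \<le> norm (K\<^sup>2 * (cmod (g x))\<^sup>2)"
    using bound
  proof eventually_elim
    case (elim x)
    then have "(cmod (h x))\<^sup>2 \<le> (K * cmod (g x))\<^sup>2" by (intro power_mono) auto
    then show ?case by (simp add: power_mult_distrib)
  qed
  moreover have "integrable M (\<lambda>x. K\<^sup>2 * (cmod (g x))\<^sup>2)"
    using L2_integrable[OF g] by simp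
  ultimately have "integrable M (\<lambda>x. (cmod (h x))\<^sup>2)"
    by (rule Bochner_Integration.integrable_bound[rotated 2]) measurable
  then show ?thesis unfolding L2_def by auto
qed

lemma L2_add:
  assumes g: "g \<in> L2 M" and h: "h \<in> L2 M"
  shows "(\<lambda>x. g x + h x) \<in> L2 M"
proof -
  note [measurable] = L2_measurable[OF g] L2_measurable[OF h]
  have "(cmod (g x + h x))\<^sup>2 \<le> 2 * (cmod (g x))\<^sup>2 + 2 * (cmod (h x))\<^sup>2" for x
  proof -
    have "(cmod (g x + h x))\<^sup>2 \<le> (cmod (g x) + cmod (h x))\<^sup>2"
      by (intro power_mono norm_triangle_ineq) simp
    also have "\<dots> \<le> 2 * (cmod (g x))\<^sup>2 + 2 * (cmod (h x))\<^sup>2"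
      using sum_squares_bound[of "cmod (g x)" "cmod (h x)"] by (simp add: power2_sum)
    finally show ?thesis .
  qed
  then have "AE x in M. norm ((cmod (g x + h x))\<^sup>2) \<le> norm (2 * (cmod (g x))\<^sup>2 + 2 * (cmod (h x))\<^sup>2)"
    by (intro AE_I2) simp
  moreover have "integrable M (\<lambda>x. 2 * (cmod (g x))\<^sup>2 + 2 * (cmod (h x))\<^sup>2)"
    using L2_integrable[OF g] L2_integrable[OF h] by simp
  ultimately have "integrable M (\<lambda>x. (cmod (g x + h x))\<^sup>2)"
    by (rule Bochner_Integration.integrable_bound[rotated 2]) measurable
  then show ?thesis unfolding L2_def by auto
qed

lemma L2_cmult: "g \<in> L2 M \<Longrightarrow> (\<lambda>x. c * g x) \<in> L2 M"
  by (rule L2_dominated[where K="cmod c"]) (auto simp: norm_mult)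

lemma L2_diff: "g \<in> L2 M \<Longrightarrow> h \<in> L2 M \<Longrightarrow> (\<lambda>x. g x - h x) \<in> L2 M"
  using L2_add[of g M "\<lambda>x. (-1) * h x"] L2_cmult[of h M "-1"] by simp

lemma L2_mult_bounded:
  assumes g: "g \<in> L2 M" and phi: "phi \<in> borel_measurable M"
    and bound: "\<And>x. x \<in> space M \<Longrightarrow> cmod (phi x) \<le> K"
  shows "(\<lambda>x. phi x * g x) \<in> L2 M"
  using g phi bound
  by (intro L2_dominated[OF g, where K=K] AE_I2) (auto simp: norm_mult intro: mult_right_mono)

lemma L2_indicator_mult: "g \<in> L2 M \<Longrightarrow> A \<in> sets M \<Longrightarrow> (\<lambda>x. indicator A x * g x) \<in> L2 M"
  by (rule L2_mult_bounded[where K=1]) (auto simp: indicator_def)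

lemma L2_indicator:
  assumes "A \<in> sets M" "emeasure M A < \<infinity>"
  shows "(indicator A :: _ \<Rightarrow> complex) \<in> L2 M"
proof -
  have "(\<integral>\<^sup>+x. ennreal ((cmod (indicator A x :: complex))\<^sup>2) \<partial>M) = (\<integral>\<^sup>+x. indicator A x \<partial>M)"
    by (intro nn_integral_cong) (auto simp: indicator_def)
  also have "\<dots> = emeasure M A"
    using assms(1) by simp
  finally have "(\<integral>\<^sup>+x. ennreal ((cmod (indicator A x :: complex))\<^sup>2) \<partial>M) = emeasure M A" .
  then show ?thesis
    unfolding L2_iff_nn_integral using assms by simp
qed

lemma borel_measurable_cnj [measurable]:
  "f \<in> borel_measurable M \<Longrightarrow> (\<lambda>x. cnj (f x)) \<in> borel_measurable M"
  by (rule borel_measurable_continuous_on[OF continuous_on_cnj[OF continuous_on_id]])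

lemma integrable_mult_cnj:
  assumes g: "g \<in> L2 M" and h: "h \<in> L2 M"
  shows "integrable M (\<lambda>x. g x * cnj (h x))"
proof -
  note [measurable] = L2_measurable[OF g] L2_measurable[OF h]
  have "norm (g x * cnj (h x)) \<le> norm ((cmod (g x))\<^sup>2 + (cmod (h x))\<^sup>2)" for x
  proof -
    have "norm (g x * cnj (h x)) = cmod (g x) * cmod (h x)"
      by (simp add: norm_mult)
    also have "\<dots> \<le> 2 * cmod (g x) * cmod (h x)"
      by simp
    also have "\<dots> \<le> (cmod (g x))\<^sup>2 + (cmod (h x))\<^sup>2"
      by (rule sum_squares_bound)
    finally show ?thesis by simp
  qed
  then have "AE x in M. norm (g x * cnj (h x)) \<le> norm ((cmod (g x))\<^sup>2 + (cmod (h x))\<^sup>2)"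
    by (intro AE_I2)
  moreover have "integrable M (\<lambda>x. (cmod (g x))\<^sup>2 + (cmod (h x))\<^sup>2)"
    using L2_integrable[OF g] L2_integrable[OF h] by simp
  ultimately show ?thesis
    by (rule Bochner_Integration.integrable_bound[rotated 2]) measurable
qed

lemma l2inner_self_eq_0_imp_AE:
  assumes g: "g \<in> L2 M" and "l2inner M g g = 0"
  shows "AE x in M. g x = 0"
proof -
  have "l2inner M g g = complex_of_real (\<integral>x. (cmod (g x))\<^sup>2 \<partial>M)"
    unfolding l2inner_def complex_norm_square[symmetric] by (rule integral_complex_of_real)
  then have "(\<integral>x. (cmod (g x))\<^sup>2 \<partial>M) = 0"
    using assms(2) by simp
  then have "AE x in M. (cmod (g x))\<^sup>2 = 0"
    using integral_nonneg_eq_0_iff_AE[OF L2_integrable[OF g]] by simp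
  then show ?thesis by simp
qed

lemma l2inner_diff_right:
  assumes "u \<in> L2 M" "g \<in> L2 M" "h \<in> L2 M"
  shows "l2inner M u (\<lambda>x. g x - h x) = l2inner M u g - l2inner M u h"
  unfolding l2inner_def using assms
  by (simp add: right_diff_distrib Bochner_Integration.integral_diff integrable_mult_cnj)

lemma L2_onI: "g \<in> L2 M \<Longrightarrow> (AE x in M. x \<notin> A \<longrightarrow> g x = 0) \<Longrightarrow> g \<in> L2_on M A"
  and L2_onD: "g \<in> L2_on M A \<Longrightarrow> g \<in> L2 M"
  and L2_on_AE_vanish: "g \<in> L2_on M A \<Longrightarrow> AE x in M. x \<notin> A \<longrightarrow> g x = 0"
  unfolding L2_on_def by blast+

lemma L2_on_AE_mono: "g \<in> L2_on M A \<Longrightarrow> AE x in M. x \<in> A \<longrightarrow> x \<in> B \<Longrightarrow> g \<in> L2_on M B"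
  unfolding L2_on_def by (auto elim: eventually_rev_mp)

lemma L2_on_AE_cong: "AE x in M. x \<in> A \<longleftrightarrow> x \<in> B \<Longrightarrow> L2_on M A = L2_on M B"
  by (auto elim: L2_on_AE_mono eventually_mono)

lemma L2_on_AE_eq: "g \<in> L2_on M A \<Longrightarrow> h \<in> L2 M \<Longrightarrow> AE x in M. g x = h x \<Longrightarrow> h \<in> L2_on M A"
  unfolding L2_on_def by (auto elim: eventually_elim2)

lemma L2_on_diff: "g \<in> L2_on M A \<Longrightarrow> h \<in> L2_on M A \<Longrightarrow> (\<lambda>x. g x - h x) \<in> L2_on M A"
  unfolding L2_on_def by (auto intro: L2_diff elim: eventually_elim2)

section \<open>Closed subspaces invariant under multiplications\<close>

context
  fixes M :: "'a measure" and V
  assumes V: "closed_subspace M V"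
begin

lemma closed_subspace_L2: "g \<in> V \<Longrightarrow> g \<in> L2 M"
  and closed_subspace_zero: "(\<lambda>x. 0) \<in> V"
  and closed_subspace_add: "g \<in> V \<Longrightarrow> h \<in> V \<Longrightarrow> (\<lambda>x. g x + h x) \<in> V"
  and closed_subspace_cmult: "g \<in> V \<Longrightarrow> (\<lambda>x. c * g x) \<in> V"
  using V unfolding closed_subspace_def by blast+

lemma closed_subspace_diff: "g \<in> V \<Longrightarrow> h \<in> V \<Longrightarrow> (\<lambda>x. g x - h x) \<in> V"
  using closed_subspace_add[of g "\<lambda>x. (-1) * h x"] closed_subspace_cmult[of h "-1"] by simp

lemma closed_subspace_sum:
  "finite C \<Longrightarrow> (\<And>c. c \<in> C \<Longrightarrow> h c \<in> V) \<Longrightarrow> (\<lambda>x. \<Sum>c\<in>C. h c x) \<in> V"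
  by (induction C rule: finite_induct) (simp_all add: closed_subspace_zero closed_subspace_add)

lemma closed_subspace_dominated_limit:
  assumes G: "\<And>n. G n \<in> V" and g: "g \<in> L2 M" and b: "b \<in> L2 M"
    and lim: "AE x in M. (\<lambda>n. G n x) \<longlonglongrightarrow> g x"
    and bound: "\<And>n. AE x in M. cmod (G n x) \<le> cmod (b x)"
  shows "g \<in> V"
proof -
  note [measurable] = L2_measurable[OF g] L2_measurable[OF closed_subspace_L2[OF G]]
  have "(\<lambda>n. \<integral>x. (cmod (G n x - g x))\<^sup>2 \<partial>M) \<longlonglongrightarrow> (\<integral>x. 0 \<partial>M)"
  proof (rule integral_dominated_convergence[where w="\<lambda>x. 2 * (cmod (b x))\<^sup>2 + 2 * (cmod (g x))\<^sup>2"])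
    show "integrable M (\<lambda>x. 2 * (cmod (b x))\<^sup>2 + 2 * (cmod (g x))\<^sup>2)"
      using L2_integrable[OF b] L2_integrable[OF g] by simp
    show "AE x in M. (\<lambda>n. (cmod (G n x - g x))\<^sup>2) \<longlonglongrightarrow> 0"
      using lim
    proof eventually_elim
      case (elim x)
      then have "(\<lambda>n. G n x - g x) \<longlonglongrightarrow> 0"
        using tendsto_diff[OF elim tendsto_const[of "g x"]] by simp
      then have "(\<lambda>n. cmod (G n x - g x)) \<longlonglongrightarrow> 0"
        by (rule tendsto_norm_zero)
      from tendsto_power[OF this, of 2] show ?case by simp
    qed
    show "AE x in M. norm ((cmod (G n x - g x))\<^sup>2) \<le> 2 * (cmod (b x))\<^sup>2 + 2 * (cmod (g x))\<^sup>2" for n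
      using bound[of n]
    proof eventually_elim
      case (elim x)
      have "cmod (G n x - g x) \<le> cmod (b x) + cmod (g x)"
        using norm_triangle_ineq4[of "G n x" "g x"] elim by linarith
      then have "(cmod (G n x - g x))\<^sup>2 \<le> (cmod (b x) + cmod (g x))\<^sup>2"
        by (intro power_mono) auto
      also have "\<dots> \<le> 2 * (cmod (b x))\<^sup>2 + 2 * (cmod (g x))\<^sup>2"
        using sum_squares_bound[of "cmod (b x)" "cmod (g x)"] by (simp add: power2_sum)
      finally show ?case by simp
    qed
  qed measurable
  then have "(\<lambda>n. \<integral>x. (cmod (G n x - g x))\<^sup>2 \<partial>M) \<longlonglongrightarrow> 0"
    by simp
  then show ?thesis
    using V G g unfolding closed_subspace_def by blast
qed

lemma closed_subspace_AE_cong: "g \<in> V \<Longrightarrow> h \<in> L2 M \<Longrightarrow> AE x in M. g x = h x \<Longrightarrow> h \<in> V"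
  by (rule closed_subspace_dominated_limit[where G="\<lambda>n. g" and b=h])
    (simp_all, (erule eventually_mono, simp)+)

lemma closed_subspace_indicator_Compl_mult:
  assumes A: "A \<in> sets M" and A_mult: "(\<lambda>x. indicator A x * g x) \<in> V" and g: "g \<in> V"
  shows "(\<lambda>x. indicator (space M - A) x * g x) \<in> V"
proof -
  have "(\<lambda>x. g x - indicator A x * g x) \<in> V"
    using A_mult g by (rule closed_subspace_diff[rotated])
  moreover have "(\<lambda>x. indicator (space M - A) x * g x) \<in> L2 M"
    using A by (intro L2_indicator_mult[OF closed_subspace_L2[OF g]]) auto
  moreover have "AE x in M. g x - indicator A x * g x = indicator (space M - A) x * g x"
    by (intro AE_I2) (simp add: indicator_def)
  ultimately show ?thesis
    by (rule closed_subspace_AE_cong)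
qed

lemma closed_subspace_indicator_UN_mult:
  assumes g: "g \<in> L2 M" and A: "\<And>i::nat. A i \<in> sets M"
    and partial: "\<And>k. (\<lambda>x. indicator (\<Union>i<k. A i) x * g x) \<in> V"
  shows "(\<lambda>x. indicator (\<Union>i. A i) x * g x) \<in> V"
proof (rule closed_subspace_dominated_limit[OF partial _ g])
  show "(\<lambda>x. indicator (\<Union>i. A i) x * g x) \<in> L2 M"
    using A by (intro L2_indicator_mult[OF g] sets.countable_UN) auto
  show "AE x in M. cmod (indicator (\<Union>i<k. A i) x * g x) \<le> cmod (g x)" for k
    by (intro AE_I2) (simp add: indicator_def)
  have "(\<lambda>k. indicator (\<Union>i<k. A i) x * g x) \<longlonglongrightarrow> indicator (\<Union>i. A i) x * g x" for x
  proof (cases "x \<in> (\<Union>i. A i)")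
    case True
    then obtain i where "x \<in> A i" by blast
    then have "eventually (\<lambda>k. indicator (\<Union>i<k. A i) x * g x = indicator (\<Union>i. A i) x * g x) sequentially"
      unfolding eventually_sequentially by (intro exI[of _ "Suc i"]) (auto simp: indicator_def)
    then show ?thesis by (rule tendsto_eventually)
  qed (simp add: indicator_def)
  then show "AE x in M. (\<lambda>k. indicator (\<Union>i<k. A i) x * g x) \<longlonglongrightarrow> indicator (\<Union>i. A i) x * g x"
    by simp
qed

end

lemma adj_invariant_adjoint_mem:
  assumes inv: "adj_invariant M H T V" and V: "closed_subspace M V" and "V \<subseteq> H" "H \<subseteq> L2 M"
    and H_diff: "\<And>g h. g \<in> H \<Longrightarrow> h \<in> H \<Longrightarrow> (\<lambda>x. g x - h x) \<in> H"
    and adjoint: "\<And>u. u \<in> H \<Longrightarrow> l2inner M (T u) g = l2inner M u g'"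
    and g: "g \<in> V" and g': "g' \<in> H"
  shows "g' \<in> V"
proof -
  obtain h where h: "h \<in> V" "\<And>u. u \<in> H \<Longrightarrow> l2inner M (T u) g = l2inner M u h"
    using inv g unfolding adj_invariant_def by blast
  define \<delta> where "\<delta> = (\<lambda>x. h x - g' x)"
  have "\<delta> \<in> H"
    unfolding \<delta>_def using h(1) g' \<open>V \<subseteq> H\<close> by (intro H_diff) auto
  then have "l2inner M \<delta> \<delta> = l2inner M (T \<delta>) g - l2inner M (T \<delta>) g"
    using \<open>H \<subseteq> L2 M\<close> h g' \<open>V \<subseteq> H\<close> unfolding \<delta>_def
    by (subst l2inner_diff_right) (auto simp: adjoint)
  then have "AE x in M. \<delta> x = 0"
    using \<open>\<delta> \<in> H\<close> \<open>H \<subseteq> L2 M\<close> by (intro l2inner_self_eq_0_imp_AE) auto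
  then have "AE x in M. h x = g' x"
    unfolding \<delta>_def by (rule eventually_mono) simp
  then show ?thesis
    using closed_subspace_AE_cong[OF V h(1)] g' \<open>H \<subseteq> L2 M\<close> by auto
qed

lemma sigma_algebra_indicator_mult_invariant:
  assumes V: "closed_subspace M V"
  shows "sigma_algebra (space M) {A \<in> sets M. \<forall>g\<in>V. (\<lambda>x. indicator A x * g x) \<in> V}"
    (is "sigma_algebra _ ?C")
proof -
  have compl: "space M - A \<in> ?C" if "A \<in> ?C" for A
    using that closed_subspace_indicator_Compl_mult[OF V] by auto
  have Int: "A \<inter> B \<in> ?C" if "A \<in> ?C" "B \<in> ?C" for A B
  proof -
    have A: "\<And>g. g \<in> V \<Longrightarrow> (\<lambda>x. indicator A x * g x) \<in> V"
      and B: "\<And>g. g \<in> V \<Longrightarrow> (\<lambda>x. indicator B x * g x) \<in> V"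
      using that by blast+
    have "(\<lambda>x. indicator A x * (indicator B x * g x)) \<in> V" if "g \<in> V" for g
      by (rule A[OF B[OF that]])
    then show ?thesis
      using that by (auto simp: indicator_inter_arith ac_simps)
  qed
  have Un: "A \<union> B \<in> ?C" if "A \<in> ?C" "B \<in> ?C" for A B
  proof -
    have "space M - ((space M - A) \<inter> (space M - B)) \<in> ?C"
      using that by (intro compl Int)
    moreover have "space M - ((space M - A) \<inter> (space M - B)) = A \<union> B"
      using that sets.sets_into_space by blast
    ultimately show ?thesis by simp
  qed
  have empty: "{} \<in> ?C"
    using closed_subspace_zero[OF V] by simp
  have UN: "(\<Union>i. A i) \<in> ?C" if A: "range A \<subseteq> ?C" for A :: "nat \<Rightarrow> _"
  proof (intro CollectI conjI ballI)
    show "(\<Union>i. A i) \<in> sets M"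
      using A by auto
    have U: "(\<Union>i<k. A i) \<in> ?C" for k
    proof (induction k)
      case (Suc k)
      have "A k \<in> ?C" using A by blast
      from Un[OF this Suc] show ?case by (simp add: lessThan_Suc)
    qed (use empty in simp)
    fix g assume g: "g \<in> V"
    show "(\<lambda>x. indicator (\<Union>i. A i) x * g x) \<in> V"
      by (rule closed_subspace_indicator_UN_mult[OF V closed_subspace_L2[OF V g]]) (use A U g in auto)
  qed
  show ?thesis
    unfolding sigma_algebra_iff2
  proof (intro conjI)
    show "?C \<subseteq> Pow (space M)"
      using sets.sets_into_space by blast
  qed (use empty compl UN in blast)+
qed

lemma closed_subspace_indicator_mult_generated:
  assumes V: "closed_subspace M V" and sets_M: "sets M = sigma_sets (space M) G"
    and G: "\<And>A g. A \<in> G \<Longrightarrow> g \<in> V \<Longrightarrow> (\<lambda>x. indicator A x * g x) \<in> V"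
    and "A \<in> sets M" "g \<in> V"
  shows "(\<lambda>x. indicator A x * g x) \<in> V"
proof -
  have "G \<subseteq> {A \<in> sets M. \<forall>g\<in>V. (\<lambda>x. indicator A x * g x) \<in> V}"
    using G unfolding sets_M by auto
  then have "sigma_sets (space M) G \<subseteq> {A \<in> sets M. \<forall>g\<in>V. (\<lambda>x. indicator A x * g x) \<in> V}"
    by (rule sigma_algebra.sigma_sets_subset[OF sigma_algebra_indicator_mult_invariant[OF V]])
  then show ?thesis
    using assms(4,5) unfolding sets_M by blast
qed

context
  fixes M :: "'a measure" and V
  assumes V: "closed_subspace M V"
    and indicator_mult: "\<And>A g. A \<in> sets M \<Longrightarrow> g \<in> V \<Longrightarrow> (\<lambda>x. indicator A x * g x) \<in> V"
begin

lemma closed_subspace_mult_simple: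
  assumes F: "simple_function M F" and g: "g \<in> V"
  shows "(\<lambda>x. F x * g x) \<in> V"
proof -
  let ?R = "F ` space M"
  have "(\<lambda>x. \<Sum>c\<in>?R. c * (indicator (F -` {c} \<inter> space M) x * g x)) \<in> V"
    using simple_functionD[OF F] g
    by (intro closed_subspace_sum[OF V] closed_subspace_cmult[OF V] indicator_mult) auto
  moreover have "(\<lambda>x. F x * g x) \<in> L2 M"
  proof (rule L2_mult_bounded[OF closed_subspace_L2[OF V g] borel_measurable_simple_function[OF F]])
    show "cmod (F x) \<le> (\<Sum>c\<in>?R. cmod c)" if "x \<in> space M" for x
      using simple_functionD(1)[OF F] that by (intro member_le_sum) auto
  qed
  moreover have "AE x in M. (\<Sum>c\<in>?R. c * (indicator (F -` {c} \<inter> space M) x * g x)) = F x * g x"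
  proof (rule AE_I2)
    fix x assume x: "x \<in> space M"
    have "F x * g x = (\<Sum>c\<in>?R. indicator (F -` {c} \<inter> space M) x *\<^sub>R c) * g x"
      by (subst simple_function_indicator_representation_banach[OF F x]) rule
    also have "\<dots> = (\<Sum>c\<in>?R. c * (indicator (F -` {c} \<inter> space M) x * g x))"
      unfolding sum_distrib_right by (intro sum.cong refl) (simp add: indicator_def)
    finally show "(\<Sum>c\<in>?R. c * (indicator (F -` {c} \<inter> space M) x * g x)) = F x * g x"
      by (rule sym)
  qed
  ultimately show ?thesis
    by (rule closed_subspace_AE_cong[OF V])
qed

lemma closed_subspace_mult_bounded:
  assumes g: "g \<in> V" and phi[measurable]: "phi \<in> borel_measurable M"
    and bound: "\<And>x. x \<in> space M \<Longrightarrow> cmod (phi x) \<le> K"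
  shows "(\<lambda>x. phi x * g x) \<in> V"
proof -
  obtain F where F: "\<And>i. simple_function M (F i)" "\<And>x. x \<in> space M \<Longrightarrow> (\<lambda>i. F i x) \<longlonglongrightarrow> phi x"
    "\<And>i x. x \<in> space M \<Longrightarrow> dist (F i x) 0 \<le> 2 * dist (phi x) 0"
    using borel_measurable_implies_sequence_metric[OF phi, of 0] by blast
  have gL: "g \<in> L2 M" by (rule closed_subspace_L2[OF V g])
  show ?thesis
  proof (rule closed_subspace_dominated_limit[OF V closed_subspace_mult_simple[OF F(1) g]])
    show "(\<lambda>x. phi x * g x) \<in> L2 M"
      using phi bound by (rule L2_mult_bounded[OF gL])
    show "(\<lambda>x. complex_of_real (2 * \<bar>K\<bar>) * g x) \<in> L2 M"
      by (rule L2_cmult[OF gL])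
    show "AE x in M. (\<lambda>i. F i x * g x) \<longlonglongrightarrow> phi x * g x"
      by (intro AE_I2 tendsto_mult F(2) tendsto_const)
    have "cmod (F i x) \<le> 2 * \<bar>K\<bar>" if "x \<in> space M" for i x
      using F(3)[OF that, of i] bound[OF that] by simp
    then show "AE x in M. cmod (F i x * g x) \<le> cmod (complex_of_real (2 * \<bar>K\<bar>) * g x)" for i
      by (intro AE_I2) (simp add: norm_mult mult_right_mono)
  qed
qed

lemma closed_subspace_L2_on_support:
  assumes g: "g \<in> V"
  shows "L2_on M {x\<in>space M. g x \<noteq> 0} \<subseteq> V"
proof
  fix u assume u: "u \<in> L2_on M {x\<in>space M. g x \<noteq> 0}"
  note [measurable] = L2_measurable[OF L2_onD[OF u]] L2_measurable[OF closed_subspace_L2[OF V g]]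
  define T where "T k = {x\<in>space M. cmod (u x / g x) \<le> real k}" for k :: nat
  have T_sets[measurable]: "T k \<in> sets M" for k
    unfolding T_def by measurable
  have trunc: "(\<lambda>x. (indicator (T k) x * (u x / g x)) * g x) \<in> V" for k
    by (rule closed_subspace_mult_bounded[OF g, where K="real k"]) (auto simp: indicator_def T_def)
  show "u \<in> V"
  proof (rule closed_subspace_dominated_limit[OF V trunc])
    show "u \<in> L2 M" by (rule L2_onD[OF u])
    show "AE x in M. cmod (indicator (T k) x * (u x / g x) * g x) \<le> cmod (u x)" for k
      by (intro AE_I2) (simp add: indicator_def norm_mult norm_divide)
    show "AE x in M. (\<lambda>k. indicator (T k) x * (u x / g x) * g x) \<longlonglongrightarrow> u x"
      using AE_space L2_on_AE_vanish[OF u]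
    proof eventually_elim
      case (elim x)
      obtain k0 where "cmod (u x / g x) \<le> real k0"
        using real_arch_simple by blast
      then have "\<forall>k\<ge>k0. indicator (T k) x * (u x / g x) * g x = u x"
        using elim by (auto simp: T_def indicator_def)
      then have "eventually (\<lambda>k. indicator (T k) x * (u x / g x) * g x = u x) sequentially"
        unfolding eventually_sequentially by blast
      then show ?case
        by (rule tendsto_eventually)
    qed
  qed (rule L2_onD[OF u])
qed

end

lemma L2_on_Un_subset:
  assumes V: "closed_subspace M V" and A[measurable]: "A \<in> sets M"
    and "L2_on M A \<subseteq> V" "L2_on M B \<subseteq> V"
  shows "L2_on M (A \<union> B) \<subseteq> V"
proof
  fix u assume u: "u \<in> L2_on M (A \<union> B)"
  have uL: "u \<in> L2 M" by (rule L2_onD[OF u])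
  have "(\<lambda>x. indicator A x * u x) \<in> L2_on M A"
    by (rule L2_onI[OF L2_indicator_mult[OF uL A]]) (simp add: indicator_def)
  moreover have "(\<lambda>x. indicator (space M - A) x * u x) \<in> L2_on M B"
    using L2_on_AE_vanish[OF u]
    by (intro L2_onI L2_indicator_mult[OF uL]) (auto simp: indicator_def elim: eventually_mono)
  ultimately have "(\<lambda>x. indicator A x * u x + indicator (space M - A) x * u x) \<in> V"
    using assms(3,4) by (intro closed_subspace_add[OF V]) auto
  moreover have "AE x in M. indicator A x * u x + indicator (space M - A) x * u x = u x"
    by (rule AE_I2) (simp add: indicator_def)
  ultimately show "u \<in> V"
    using closed_subspace_AE_cong[OF V _ uL] by blast
qed

lemma L2_on_UN_subset:
  assumes V: "closed_subspace M V" and A: "\<And>i::nat. A i \<in> sets M" and AV: "\<And>i. L2_on M (A i) \<subseteq> V"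
  shows "L2_on M (\<Union>i. A i) \<subseteq> V"
proof
  fix u assume u: "u \<in> L2_on M (\<Union>i. A i)"
  have uL: "u \<in> L2 M" by (rule L2_onD[OF u])
  have U_sets: "(\<Union>i<k. A i) \<in> sets M" for k
    using A by auto
  have U: "L2_on M (\<Union>i<k. A i) \<subseteq> V" for k
  proof (induction k)
    case 0
    have "L2_on M {} \<subseteq> V"
      using closed_subspace_AE_cong[OF V closed_subspace_zero[OF V]]
      by (auto simp: L2_on_def elim: eventually_mono)
    then show ?case by simp
  next
    case (Suc k)
    then show ?case
      using L2_on_Un_subset[OF V U_sets Suc AV[of k]] by (simp add: lessThan_Suc Un_commute)
  qed
  have "(\<lambda>x. indicator (\<Union>i<k. A i) x * u x) \<in> L2_on M (\<Union>i<k. A i)" for k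
    by (intro L2_onI L2_indicator_mult[OF uL U_sets]) (simp add: indicator_def)
  then have "(\<lambda>x. indicator (\<Union>i. A i) x * u x) \<in> V"
    using U by (intro closed_subspace_indicator_UN_mult[OF V uL A]) blast
  moreover have "AE x in M. indicator (\<Union>i. A i) x * u x = u x"
    using L2_on_AE_vanish[OF u] by (rule eventually_mono) (auto simp: indicator_def)
  ultimately show "u \<in> V"
    by (rule closed_subspace_AE_cong[OF V _ uL])
qed

lemma (in sigma_finite_measure) ex_finite_measure_same_null_sets:
  obtains N where "finite_measure N" "sets N = sets M"
    "\<And>A. A \<in> sets M \<Longrightarrow> emeasure N A = 0 \<Longrightarrow> A \<in> null_sets M"
proof -
  obtain h where h[measurable]: "h \<in> borel_measurable M" and "integral\<^sup>N M h \<noteq> \<infinity>"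
    and h_pos: "\<And>x. x \<in> space M \<Longrightarrow> 0 < h x"
    using Ex_finite_integrable_function by blast
  have "emeasure (density M h) (space M) = (\<integral>\<^sup>+x. h x * indicator (space M) x \<partial>M)"
    by (simp add: emeasure_density)
  also have "\<dots> = integral\<^sup>N M h"
    by (intro nn_integral_cong) simp
  finally have "finite_measure (density M h)"
    using \<open>integral\<^sup>N M h \<noteq> \<infinity>\<close> by (intro finite_measureI) simp
  moreover have "A \<in> null_sets M" if "A \<in> sets M" "emeasure (density M h) A = 0" for A
  proof -
    have "A \<in> null_sets (density M h)"
      using that by (intro null_setsI) simp_all
    then have "AE x in M. x \<in> A \<longrightarrow> h x = 0"
      unfolding null_sets_density_iff[OF h] by blast
    then have "AE x in M. x \<notin> A"
      using AE_space
    proof eventually_elim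
      case (elim x)
      then show ?case using h_pos[of x] by auto
    qed
    then show ?thesis
      using that(1) by (simp add: AE_iff_null_sets)
  qed
  ultimately show ?thesis
    using that[of "density M h"] by simp
qed

lemma ex_max_emeasure:
  assumes "\<A> \<subseteq> sets M" "\<A> \<noteq> {}" and UN: "\<And>A. range A \<subseteq> \<A> \<Longrightarrow> (\<Union>i::nat. A i) \<in> \<A>"
  obtains F where "F \<in> \<A>" "\<And>B. B \<in> \<A> \<Longrightarrow> emeasure M B \<le> emeasure M F"
proof -
  obtain S :: "nat \<Rightarrow> ennreal" where S: "range S \<subseteq> emeasure M ` \<A>" "Sup (emeasure M ` \<A>) = Sup (range S)"
    using ennreal_SUP_countable_SUP[OF \<open>\<A> \<noteq> {}\<close>, of "emeasure M"] by blast
  have "\<forall>i. \<exists>A. A \<in> \<A> \<and> S i = emeasure M A"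
    using S(1) by blast
  from choice[OF this] obtain A where A: "\<And>i. A i \<in> \<A>" "\<And>i. S i = emeasure M (A i)"
    by blast
  define F where "F = (\<Union>i. A i)"
  have F: "F \<in> \<A>"
    unfolding F_def using A(1) by (intro UN) auto
  then have F_sets: "F \<in> sets M"
    using \<open>\<A> \<subseteq> sets M\<close> by auto
  show ?thesis
  proof (rule that[OF F])
    fix B assume "B \<in> \<A>"
    then have "emeasure M B \<le> Sup (emeasure M ` \<A>)"
      by (intro Sup_upper) auto
    also have "\<dots> \<le> emeasure M F"
      unfolding S(2)
    proof (rule Sup_least)
      fix y assume "y \<in> range S"
      then obtain i where "y = S i" by blast
      then show "y \<le> emeasure M F"
        using A(2) emeasure_mono[OF _ F_sets, of "A i"] unfolding F_def by auto
    qed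
    finally show "emeasure M B \<le> emeasure M F" .
  qed
qed

text \<open>Take a member of largest measure for a finite measure with the same null sets as M.\<close>
lemma (in sigma_finite_measure) ex_max_up_to_null_sets:
  assumes "\<A> \<subseteq> sets M" "\<A> \<noteq> {}"
    and Un: "\<And>A B. A \<in> \<A> \<Longrightarrow> B \<in> \<A> \<Longrightarrow> A \<union> B \<in> \<A>"
    and UN: "\<And>A. range A \<subseteq> \<A> \<Longrightarrow> (\<Union>i::nat. A i) \<in> \<A>"
  obtains F where "F \<in> \<A>" "\<And>B. B \<in> \<A> \<Longrightarrow> B - F \<in> null_sets M"
proof -
  obtain N where "finite_measure N" and sets_N [simp]: "sets N = sets M"
    and N_null: "\<And>A. A \<in> sets M \<Longrightarrow> emeasure N A = 0 \<Longrightarrow> A \<in> null_sets M"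
    by (rule ex_finite_measure_same_null_sets) blast
  interpret N: finite_measure N
    by fact
  obtain F where F: "F \<in> \<A>" and N_F: "\<And>B. B \<in> \<A> \<Longrightarrow> emeasure N B \<le> emeasure N F"
    using ex_max_emeasure[of \<A> N] assms(1,2) UN by auto
  show ?thesis
  proof (rule that[OF F])
    fix B assume B: "B \<in> \<A>"
    have sets: "F \<in> sets M" "B \<in> sets M"
      using F B \<open>\<A> \<subseteq> sets M\<close> by auto
    have "emeasure N F + emeasure N (B - F) = emeasure N (F \<union> (B - F))"
      using sets by (intro plus_emeasure) auto
    also have "\<dots> = emeasure N (F \<union> B)"
      by (simp add: Un_Diff_cancel)
    also have "\<dots> \<le> emeasure N F + 0"
      using N_F[OF Un[OF F B]] by simp
    finally have "emeasure N F = \<infinity> \<or> emeasure N (B - F) \<le> 0"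
      by (simp only: ennreal_add_left_cancel_le)
    then have "emeasure N (B - F) = 0"
      using N.emeasure_finite[of F] by auto
    then show "B - F \<in> null_sets M"
      using sets by (intro N_null) auto
  qed
qed

lemma (in sigma_finite_measure) closed_subspace_eq_L2_on:
  assumes V: "closed_subspace M V"
    and indicator_mult: "\<And>A g. A \<in> sets M \<Longrightarrow> g \<in> V \<Longrightarrow> (\<lambda>x. indicator A x * g x) \<in> V"
  obtains F where "F \<in> sets M" "V = L2_on M F"
proof -
  let ?\<A> = "{A \<in> sets M. L2_on M A \<subseteq> V}"
  have "L2_on M {} \<subseteq> V"
  proof
    fix u assume u: "u \<in> L2_on M {}"
    have "AE x in M. 0 = u x"
      using L2_on_AE_vanish[OF u] by (rule eventually_mono) simp
    then show "u \<in> V"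
      by (rule closed_subspace_AE_cong[OF V closed_subspace_zero[OF V] L2_onD[OF u]])
  qed
  have "\<exists>F. F \<in> ?\<A> \<and> (\<forall>B\<in>?\<A>. B - F \<in> null_sets M)"
  proof (rule ex_max_up_to_null_sets[of ?\<A>])
    show "?\<A> \<noteq> {}"
      using \<open>L2_on M {} \<subseteq> V\<close> by blast
    show "A \<union> B \<in> ?\<A>" if "A \<in> ?\<A>" "B \<in> ?\<A>" for A B
      using that L2_on_Un_subset[OF V, of A B] by blast
    show "(\<Union>i. A i) \<in> ?\<A>" if "range A \<subseteq> ?\<A>" for A :: "nat \<Rightarrow> _"
      using that L2_on_UN_subset[OF V, of A] by blast
  qed blast+
  then obtain F where F: "F \<in> ?\<A>" and F_max: "\<And>B. B \<in> ?\<A> \<Longrightarrow> B - F \<in> null_sets M"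
    by blast
  have "g \<in> L2_on M F" if g: "g \<in> V" for g
  proof (rule L2_onI)
    show "g \<in> L2 M" by (rule closed_subspace_L2[OF V g])
    note [measurable] = L2_measurable[OF this]
    have "{x\<in>space M. g x \<noteq> 0} - F \<in> null_sets M"
      using closed_subspace_L2_on_support[OF V indicator_mult g] by (intro F_max) auto
    then have "AE x in M. x \<notin> {x\<in>space M. g x \<noteq> 0} - F"
      by (rule AE_not_in)
    then show "AE x in M. x \<notin> F \<longrightarrow> g x = 0"
      using AE_space by eventually_elim auto
  qed
  then have "V = L2_on M F"
    using F by blast
  then show ?thesis
    using F that by blast
qed

lemma (in sigma_finite_measure) null_diff_if_L2_on_subset:
  assumes B[measurable]: "B \<in> sets M" and F[measurable]: "F \<in> sets M" and "L2_on M B \<subseteq> L2_on M F"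
  shows "B - F \<in> null_sets M"
proof -
  obtain A :: "nat \<Rightarrow> _" where A: "range A \<subseteq> sets M" "(\<Union>i. A i) = space M" "\<And>i. emeasure M (A i) \<noteq> \<infinity>"
    by (rule sigma_finite) blast
  have "(B \<inter> A i) - F \<in> null_sets M" for i
  proof -
    have A_i[measurable]: "A i \<in> sets M"
      using A(1) by blast
    have "emeasure M (B \<inter> A i) \<le> emeasure M (A i)"
      by (intro emeasure_mono) auto
    then have "(indicator (B \<inter> A i) :: _ \<Rightarrow> complex) \<in> L2_on M B"
      using A(3)[of i] by (intro L2_onI L2_indicator) (auto simp: top.not_eq_extremum)
    then have "AE x in M. x \<notin> F \<longrightarrow> (indicator (B \<inter> A i) x :: complex) = 0"
      using assms(3) L2_on_AE_vanish by blast
    then have "AE x in M. x \<notin> (B \<inter> A i) - F"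
      by (rule eventually_mono) (auto simp: indicator_def)
    then show ?thesis
      by (simp add: AE_iff_null_sets)
  qed
  then have "(\<Union>i. (B \<inter> A i) - F) \<in> null_sets M"
    by (rule null_sets_UN)
  moreover have "B - F = (\<Union>i. (B \<inter> A i) - F)"
    using A(2) sets.sets_into_space[OF B] by blast
  ultimately show ?thesis
    by simp
qed

lemma (in sigma_finite_measure) L2_on_nontrivial:
  assumes E[measurable]: "E \<in> sets M" and "emeasure M E \<noteq> 0"
  shows "\<exists>g\<in>L2_on M E. \<not> (AE x in M. g x = 0)"
proof -
  obtain A :: "nat \<Rightarrow> _" where A: "range A \<subseteq> sets M" "(\<Union>i. A i) = space M" "\<And>i. emeasure M (A i) \<noteq> \<infinity>"
    by (rule sigma_finite) blast
  have "E = (\<Union>i. E \<inter> A i)"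
    using A(2) sets.sets_into_space[OF E] by blast
  then obtain i where i: "E \<inter> A i \<notin> null_sets M"
    using assms(2) null_sets_UN[of "\<lambda>i. E \<inter> A i" M] by (metis null_setsD1)
  have A_i[measurable]: "A i \<in> sets M"
    using A(1) by blast
  have "emeasure M (E \<inter> A i) \<le> emeasure M (A i)"
    by (intro emeasure_mono) auto
  then have "(indicator (E \<inter> A i) :: _ \<Rightarrow> complex) \<in> L2_on M E"
    using A(3)[of i] by (intro L2_onI L2_indicator) (auto simp: top.not_eq_extremum)
  moreover have "\<not> (AE x in M. (indicator (E \<inter> A i) x :: complex) = 0)"
  proof
    assume "AE x in M. (indicator (E \<inter> A i) x :: complex) = 0"
    then have "AE x in M. x \<notin> E \<inter> A i"
      by (rule eventually_mono) (simp add: indicator_def split: if_splits)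
    then show False
      using i by (simp add: AE_iff_null_sets)
  qed
  ultimately show ?thesis
    by blast
qed

section \<open>The representation of a projective system\<close>

locale kgraph_projective_system = k_graph d r s cmp
  for d :: "'p \<Rightarrow> ('k::finite \<Rightarrow> nat)" and r s cmp +
  fixes M :: "(('k \<Rightarrow> nat) \<Rightarrow> ('k \<Rightarrow> nat) \<Rightarrow> 'p) measure"
    and f :: "'p \<Rightarrow> (('k \<Rightarrow> nat) \<Rightarrow> ('k \<Rightarrow> nat) \<Rightarrow> 'p) \<Rightarrow> complex"
  assumes space_M: "space M = infpaths d r s cmp"
    and sets_M: "sets M = sigma_sets (infpaths d r s cmp) (range (cyl d r s cmp))"
    and emeasure_cyl_finite: "emeasure M (cyl d r s cmp l) < \<infinity>"
    and projective: "projective_system d r s cmp M f"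
begin

abbreviation "Z \<equiv> cyl d r s cmp"
abbreviation "tau \<equiv> prefix d r s cmp"
abbreviation "D l \<equiv> Z (s l)"
abbreviation "W l \<equiv> tau l ` D l"

lemma cyl_sets [measurable]: "Z l \<in> sets M"
  unfolding sets_M by (rule sigma_sets.Basic) simp

lemma cyl_subset_space: "Z l \<subseteq> space M"
  unfolding space_M cyl_def by auto

lemma semibranching_deg: "semibranching M {l. d l = n} D tau (shift n)"
  using projective unfolding projective_system_def by blast

lemma shift_measurable [measurable]: "shift n \<in> measurable M M"
  using semibranching_deg unfolding semibranching_def by blast

lemma prefix_measurable: "tau l \<in> measurable (restrict_space M (D l)) M"
  using semibranching_deg[of "d l"] unfolding semibranching_def by blast

lemma prefix_image_sets: "A \<in> sets M \<Longrightarrow> A \<subseteq> D l \<Longrightarrow> tau l ` A \<in> sets M"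
  using semibranching_deg[of "d l"] unfolding semibranching_def by blast

lemma range_sets [measurable]: "W l \<in> sets M"
  by (rule prefix_image_sets) auto

lemma prefix_image_null: "A \<in> null_sets M \<Longrightarrow> A \<subseteq> D l \<Longrightarrow> tau l ` A \<in> null_sets M"
proof -
  assume A: "A \<in> null_sets M" "A \<subseteq> D l"
  obtain h where h: "\<forall>A\<in>sets M. A \<subseteq> D l \<longrightarrow> emeasure M (tau l ` A) = (\<integral>\<^sup>+x\<in>A. ennreal (h x) \<partial>M)"
    using semibranching_deg[of "d l"] unfolding semibranching_def by blast
  then have "emeasure M (tau l ` A) = 0"
    using A nn_integral_null_set[of A M] by auto
  then show ?thesis
    using A prefix_image_sets[of A l] by (intro null_setsI) auto
qed

lemma ranges_cover: "space M - (\<Union>l\<in>{l. d l = n}. W l) \<in> null_sets M"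
proof -
  have "(\<Union>l\<in>{l. d l = n}. W l) \<in> sets M"
    using countable_subset[OF subset_UNIV countable_morphisms] by (intro sets.countable_UN'') auto
  then show ?thesis
    using semibranching_deg[of n] unfolding semibranching_def by auto
qed

lemma f_measurable [measurable]: "f l \<in> borel_measurable M"
  and emeasure_prefix_preimage:
    "A \<in> sets M \<Longrightarrow> emeasure M (tau l -` A \<inter> D l) = (\<integral>\<^sup>+x\<in>A. ennreal ((cmod (f l x))\<^sup>2) \<partial>M)"
  using projective unfolding projective_system_def by blast+

lemma prefix_in_space: "y \<in> D l \<Longrightarrow> tau l y \<in> space M"
  using prefix_in_cyl cyl_subset_space by blast

lemma shift_in_space: "x \<in> space M \<Longrightarrow> shift n x \<in> space M"
  using measurable_space[OF shift_measurable] .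

lemma shift_prefix_range: "x \<in> W l \<Longrightarrow> shift (d l) x \<in> D l \<and> tau l (shift (d l) x) = x"
  using shift_prefix by auto

lemma prefix_preimage_sets: "A \<in> sets M \<Longrightarrow> tau l -` A \<inter> D l \<in> sets M"
  using measurable_sets[OF prefix_measurable] cyl_subset_space
  by (auto simp: sets_restrict_space_iff space_restrict_space Int_absorb2)

lemma distr_prefix: "distr (restrict_space M (D l)) M (tau l) = density M (\<lambda>x. ennreal ((cmod (f l x))\<^sup>2))"
proof (rule measure_eqI)
  fix A assume "A \<in> sets (distr (restrict_space M (D l)) M (tau l))"
  then have A: "A \<in> sets M" by simp
  have "space (restrict_space M (D l)) = D l"
    using cyl_subset_space by (simp add: space_restrict_space Int_absorb2)
  then have "emeasure (distr (restrict_space M (D l)) M (tau l)) A = emeasure M (tau l -` A \<inter> D l)"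
    using A prefix_preimage_sets[OF A]
    by (simp add: emeasure_distr[OF prefix_measurable A] emeasure_restrict_space)
  then show "emeasure (distr (restrict_space M (D l)) M (tau l)) A
      = emeasure (density M (\<lambda>x. ennreal ((cmod (f l x))\<^sup>2))) A"
    using A by (simp add: emeasure_prefix_preimage emeasure_density)
qed simp

lemma nn_integral_prefix:
  assumes [measurable]: "g \<in> borel_measurable M"
  shows "(\<integral>\<^sup>+y. g (tau l y) * indicator (D l) y \<partial>M) = (\<integral>\<^sup>+x. ennreal ((cmod (f l x))\<^sup>2) * g x \<partial>M)"
proof -
  have "(\<integral>\<^sup>+y. g (tau l y) * indicator (D l) y \<partial>M) = (\<integral>\<^sup>+y. g (tau l y) \<partial>restrict_space M (D l))"
    by (rule nn_integral_restrict_space[symmetric]) simp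
  also have "\<dots> = (\<integral>\<^sup>+x. g x \<partial>distr (restrict_space M (D l)) M (tau l))"
    by (rule nn_integral_distr[OF prefix_measurable, symmetric]) simp
  also have "\<dots> = (\<integral>\<^sup>+x. ennreal ((cmod (f l x))\<^sup>2) * g x \<partial>M)"
    unfolding distr_prefix by (rule nn_integral_density) simp_all
  finally show ?thesis .
qed

lemma integral_prefix:
  fixes \<psi> :: "_ \<Rightarrow> complex"
  assumes [measurable]: "\<psi> \<in> borel_measurable M"
  shows "(\<integral>y. indicator (D l) y *\<^sub>R \<psi> (tau l y) \<partial>M) = (\<integral>x. (cmod (f l x))\<^sup>2 *\<^sub>R \<psi> x \<partial>M)"
proof -
  have "(\<integral>y. indicator (D l) y *\<^sub>R \<psi> (tau l y) \<partial>M) = (\<integral>y. \<psi> (tau l y) \<partial>restrict_space M (D l))"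
    by (rule integral_restrict_space[symmetric]) simp
  also have "\<dots> = (\<integral>x. \<psi> x \<partial>distr (restrict_space M (D l)) M (tau l))"
    by (rule integral_distr[OF prefix_measurable, symmetric]) simp
  also have "\<dots> = (\<integral>x. (cmod (f l x))\<^sup>2 *\<^sub>R \<psi> x \<partial>M)"
    unfolding distr_prefix by (rule integral_density) simp_all
  finally show ?thesis .
qed

sublocale sigma_finite_measure M
proof
  show "\<exists>A. countable A \<and> A \<subseteq> sets M \<and> \<Union> A = space M \<and> (\<forall>a\<in>A. emeasure M a \<noteq> \<infinity>)"
  proof (intro exI[of _ "range Z"] conjI)
    show "\<Union> (range Z) = space M"
      using cyl_subset_space infpath_in_cyl_vertex space_M by blast
  qed (use countable_morphisms emeasure_cyl_finite in \<open>auto simp: less_top\<close>)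
qed

lemma AE_f_nonzero_imp_range: "AE x in M. f l x \<noteq> 0 \<longrightarrow> x \<in> W l"
proof -
  have "tau l -` (space M - W l) \<inter> D l = {}"
    by auto
  then have "(\<integral>\<^sup>+x\<in>space M - W l. ennreal ((cmod (f l x))\<^sup>2) \<partial>M) = 0"
    using emeasure_prefix_preimage[of "space M - W l" l] by simp
  then have "AE x in M. ennreal ((cmod (f l x))\<^sup>2) * indicator (space M - W l) x = 0"
    by (subst nn_integral_0_iff_AE[symmetric]) auto
  then show ?thesis
    using AE_space by eventually_elim (auto simp: indicator_def)
qed

lemma prefix_preimage_null: "N \<in> null_sets M \<Longrightarrow> tau l -` N \<inter> D l \<in> null_sets M"
  using emeasure_prefix_preimage[of N l] prefix_preimage_sets[of N l]
  by (auto simp: nn_integral_null_set)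

lemma AE_prefix_not_in_null: "N \<in> null_sets M \<Longrightarrow> AE y in M. y \<in> D l \<longrightarrow> tau l y \<notin> N"
  by (rule AE_I'[OF prefix_preimage_null]) auto

lemma prefix_preimage_f_zero_null: "tau l -` {x\<in>space M. f l x = 0} \<inter> D l \<in> null_sets M"
proof -
  have A: "{x\<in>space M. f l x = 0} \<in> sets M"
    by measurable
  have "(\<integral>\<^sup>+x\<in>{x\<in>space M. f l x = 0}. ennreal ((cmod (f l x))\<^sup>2) \<partial>M) = 0"
    by (subst nn_integral_0_iff_AE) (auto simp: indicator_def)
  then have "emeasure M (tau l -` {x\<in>space M. f l x = 0} \<inter> D l) = 0"
    by (simp only: emeasure_prefix_preimage[OF A])
  then show ?thesis
    by (rule null_setsI[OF _ prefix_preimage_sets[OF A]])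
qed

lemma AE_f_prefix_nonzero: "AE y in M. y \<in> D l \<longrightarrow> f l (tau l y) \<noteq> 0"
  by (rule AE_I'[OF prefix_preimage_f_zero_null]) (auto intro: prefix_in_space)

lemma AE_range_imp_f_nonzero: "AE x in M. x \<in> W l \<longrightarrow> f l x \<noteq> 0"
proof (rule AE_I')
  show "tau l ` (tau l -` {x\<in>space M. f l x = 0} \<inter> D l) \<in> null_sets M"
    using prefix_preimage_f_zero_null by (rule prefix_image_null) auto
qed (auto intro: prefix_in_space)

lemma AE_shift_not_in_null: "N \<in> null_sets M \<Longrightarrow> AE x in M. f l x \<noteq> 0 \<longrightarrow> shift (d l) x \<notin> N"
proof -
  assume N: "N \<in> null_sets M"
  have "tau l ` (N \<inter> D l) \<in> null_sets M"
    using null_set_Int2[OF N] by (rule prefix_image_null) auto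
  from AE_not_in[OF this] AE_f_nonzero_imp_range[of l] show ?thesis
    by eventually_elim (auto simp: shift_prefix)
qed

lemma cyl_diff_range_null: "Z l - W l \<in> null_sets M"
proof (rule null_sets_subset[OF ranges_cover[of "d l"]])
  show "Z l - W l \<subseteq> space M - (\<Union>l'\<in>{l'. d l' = d l}. W l')"
    using cyl_subset_space prefix_in_cyl cyl_eq_deg_unique by fastforce
qed auto

text \<open>The adjoint of T_\<lambda>. Where f_\<lambda> \<circ> \<sigma>_\<lambda> vanishes, division by zero yields 0; this is
  harmless because it vanishes only on a null subset of Z(s \<lambda>).\<close>
definition Tadj :: "'p \<Rightarrow> ((('k \<Rightarrow> nat) \<Rightarrow> ('k \<Rightarrow> nat) \<Rightarrow> 'p) \<Rightarrow> complex)
    \<Rightarrow> ((('k \<Rightarrow> nat) \<Rightarrow> ('k \<Rightarrow> nat) \<Rightarrow> 'p) \<Rightarrow> complex)" where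
  "Tadj l g = (\<lambda>y. indicator (D l) y *\<^sub>R (g (tau l y) / f l (tau l y)))"

lemma Top_measurable [measurable]:
  assumes [measurable]: "g \<in> borel_measurable M"
  shows "Top d f l g \<in> borel_measurable M"
  unfolding Top_def by measurable

lemma Tadj_measurable [measurable]:
  assumes g: "g \<in> borel_measurable M"
  shows "Tadj l g \<in> borel_measurable M"
proof -
  have "(\<lambda>y. g (tau l y) / f l (tau l y)) \<in> borel_measurable (restrict_space M (D l))"
    using measurable_compose[OF prefix_measurable g] measurable_compose[OF prefix_measurable f_measurable]
    by (rule borel_measurable_divide)
  moreover have "D l \<inter> space M \<in> sets M"
    by simp
  ultimately show ?thesis
    unfolding Tadj_def by (subst borel_measurable_restrict_space_iff[symmetric])
qed

lemma Top_L2: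
  assumes g: "g \<in> L2 M"
  shows "Top d f l g \<in> L2 M"
proof -
  note [measurable] = L2_measurable[OF g]
  have "(\<integral>\<^sup>+x. ennreal ((cmod (Top d f l g x))\<^sup>2) \<partial>M)
      = (\<integral>\<^sup>+x. ennreal ((cmod (f l x))\<^sup>2) * ennreal ((cmod (g (shift (d l) x)))\<^sup>2) \<partial>M)"
    unfolding Top_def by (intro nn_integral_cong) (simp add: norm_mult power_mult_distrib ennreal_mult)
  also have "\<dots> = (\<integral>\<^sup>+y. ennreal ((cmod (g (shift (d l) (tau l y))))\<^sup>2) * indicator (D l) y \<partial>M)"
    by (rule nn_integral_prefix[symmetric]) measurable
  also have "\<dots> = (\<integral>\<^sup>+y. ennreal ((cmod (g y))\<^sup>2) * indicator (D l) y \<partial>M)"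
    by (intro nn_integral_cong) (auto simp: indicator_def shift_prefix)
  also have "\<dots> \<le> (\<integral>\<^sup>+y. ennreal ((cmod (g y))\<^sup>2) \<partial>M)"
    by (intro nn_integral_mono) (auto simp: indicator_def)
  also have "\<dots> < \<infinity>"
    using g unfolding L2_iff_nn_integral by blast
  finally show ?thesis
    unfolding L2_iff_nn_integral by simp
qed

lemma Tadj_L2:
  assumes g: "g \<in> L2 M"
  shows "Tadj l g \<in> L2 M"
proof -
  note [measurable] = L2_measurable[OF g]
  have "(\<integral>\<^sup>+y. ennreal ((cmod (Tadj l g y))\<^sup>2) \<partial>M)
      = (\<integral>\<^sup>+y. ennreal ((cmod (g (tau l y)))\<^sup>2 / (cmod (f l (tau l y)))\<^sup>2) * indicator (D l) y \<partial>M)"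
    unfolding Tadj_def by (intro nn_integral_cong) (auto simp: indicator_def norm_divide power_divide)
  also have "\<dots> = (\<integral>\<^sup>+x. ennreal ((cmod (f l x))\<^sup>2) * ennreal ((cmod (g x))\<^sup>2 / (cmod (f l x))\<^sup>2) \<partial>M)"
    by (rule nn_integral_prefix) measurable
  also have "\<dots> \<le> (\<integral>\<^sup>+x. ennreal ((cmod (g x))\<^sup>2) \<partial>M)"
    by (intro nn_integral_mono) (simp add: ennreal_mult[symmetric])
  also have "\<dots> < \<infinity>"
    using g unfolding L2_iff_nn_integral by blast
  finally show ?thesis
    unfolding L2_iff_nn_integral by simp
qed

lemma l2inner_Top_Tadj:
  assumes u[measurable]: "u \<in> borel_measurable M" and g[measurable]: "g \<in> borel_measurable M"
  shows "l2inner M (Top d f l u) g = l2inner M u (Tadj l g)"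
proof -
  define \<psi> where "\<psi> x = u (shift (d l) x) * cnj (g x / f l x)" for x
  have [measurable]: "\<psi> \<in> borel_measurable M"
    unfolding \<psi>_def by measurable
  have "l2inner M u (Tadj l g) = (\<integral>y. indicator (D l) y *\<^sub>R \<psi> (tau l y) \<partial>M)"
    unfolding l2inner_def Tadj_def \<psi>_def
    by (intro Bochner_Integration.integral_cong) (auto simp: indicator_def shift_prefix)
  also have "\<dots> = (\<integral>x. (cmod (f l x))\<^sup>2 *\<^sub>R \<psi> x \<partial>M)"
    by (rule integral_prefix) measurable
  also have "\<dots> = l2inner M (Top d f l u) g"
    unfolding l2inner_def Top_def \<psi>_def
  proof (intro Bochner_Integration.integral_cong refl)
    fix x
    have "complex_of_real ((cmod (f l x))\<^sup>2) = f l x * cnj (f l x)"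
      by (rule complex_norm_square)
    then show "(cmod (f l x))\<^sup>2 *\<^sub>R (u (shift (d l) x) * cnj (g x / f l x))
        = f l x * u (shift (d l) x) * cnj (g x)"
      by (cases "f l x = 0") (simp_all add: scaleR_conv_of_real field_simps)
  qed
  finally show ?thesis ..
qed

lemma Top_Tadj_AE: "AE x in M. Top d f l (Tadj l g) x = indicator (W l) x * g x"
  using AE_f_nonzero_imp_range[of l] AE_range_imp_f_nonzero[of l]
  by eventually_elim (auto simp: Top_def Tadj_def shift_prefix)

lemma Tadj_Top_AE: "AE y in M. Tadj l (Top d f l g) y = indicator (D l) y * g y"
  using AE_f_prefix_nonzero[of l]
  by eventually_elim (auto simp: Top_def Tadj_def shift_prefix indicator_def)

lemma Top_AE_support:
  assumes "AE x in M. x \<notin> B \<longrightarrow> g x = 0"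
  shows "AE x in M. Top d f l g x \<noteq> 0 \<longrightarrow> x \<in> W l \<and> shift (d l) x \<in> B"
proof -
  obtain N where N: "{x \<in> space M. \<not> (x \<notin> B \<longrightarrow> g x = 0)} \<subseteq> N" "N \<in> null_sets M"
    using assms by (auto elim!: AE_E)
  from AE_space AE_shift_not_in_null[OF N(2), of l] AE_f_nonzero_imp_range[of l] show ?thesis
    by eventually_elim (use N(1) shift_in_space in \<open>auto simp: Top_def\<close>)
qed

lemma Tadj_AE_support:
  assumes "AE x in M. x \<notin> B \<longrightarrow> g x = 0"
  shows "AE y in M. Tadj l g y \<noteq> 0 \<longrightarrow> y \<in> D l \<and> tau l y \<in> B"
proof -
  obtain N where N: "{x \<in> space M. \<not> (x \<notin> B \<longrightarrow> g x = 0)} \<subseteq> N" "N \<in> null_sets M"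
    using assms by (auto elim!: AE_E)
  from AE_prefix_not_in_null[OF N(2), of l] show ?thesis
    by eventually_elim (use N(1) prefix_in_space in \<open>auto simp: Tadj_def indicator_def\<close>)
qed

section \<open>Invariant sets and invariant subspaces\<close>

lemma shift_preimage_sets [measurable]: "A \<in> sets M \<Longrightarrow> shift n -` A \<inter> space M \<in> sets M"
  by (rule measurable_sets[OF shift_measurable])

lemma mu_invariant_null_diff:
  assumes "mu_invariant M A"
  shows "A - (shift n -` A \<inter> space M) \<in> null_sets M" and "(shift n -` A \<inter> space M) - A \<in> null_sets M"
proof -
  have [measurable]: "A \<in> sets M"
    using assms unfolding mu_invariant_def by blast
  have "(A - (shift n -` A \<inter> space M)) \<union> ((shift n -` A \<inter> space M) - A) \<in> null_sets M"
    using assms unfolding mu_invariant_def by (intro null_setsI) auto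
  then show "A - (shift n -` A \<inter> space M) \<in> null_sets M" "(shift n -` A \<inter> space M) - A \<in> null_sets M"
    by (auto elim: null_sets_subset)
qed

lemma Top_L2_on:
  assumes A: "(shift (d l) -` A \<inter> space M) - A \<in> null_sets M" and g: "g \<in> L2_on M A"
  shows "Top d f l g \<in> L2_on M A"
proof (rule L2_onI)
  show "Top d f l g \<in> L2 M"
    by (rule Top_L2[OF L2_onD[OF g]])
  from AE_space Top_AE_support[OF L2_on_AE_vanish[OF g], of l] AE_not_in[OF A]
  show "AE x in M. x \<notin> A \<longrightarrow> Top d f l g x = 0"
    by eventually_elim auto
qed

lemma Tadj_L2_on:
  assumes A: "A - (shift (d l) -` A \<inter> space M) \<in> null_sets M" and g: "g \<in> L2_on M A"
  shows "Tadj l g \<in> L2_on M A"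
proof (rule L2_onI)
  show "Tadj l g \<in> L2 M"
    by (rule Tadj_L2[OF L2_onD[OF g]])
  from Tadj_AE_support[OF L2_on_AE_vanish[OF g], of l] AE_prefix_not_in_null[OF A, of l]
  show "AE x in M. x \<notin> A \<longrightarrow> Tadj l g x = 0"
    by eventually_elim (use prefix_in_space shift_prefix in fastforce)
qed

lemma Top_invariant_imp_shift_preimage_diff_null:
  assumes A[measurable]: "A \<in> sets M"
    and Top_inv: "\<And>l g. d l = n \<Longrightarrow> g \<in> L2_on M A \<Longrightarrow> Top d f l g \<in> L2_on M A"
  shows "(shift n -` A \<inter> space M) - A \<in> null_sets M"
proof -
  have "(shift n -` A \<inter> space M) \<inter> W l - A \<in> null_sets M" if l: "d l = n" for l
  proof (rule null_diff_if_L2_on_subset)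
    show "L2_on M ((shift n -` A \<inter> space M) \<inter> W l) \<subseteq> L2_on M A"
    proof
      fix u assume u: "u \<in> L2_on M ((shift n -` A \<inter> space M) \<inter> W l)"
      have "y \<in> A" if "y \<in> D l" "tau l y \<in> shift n -` A" for y
        using that l shift_prefix[of y l] by simp
      with Tadj_AE_support[OF L2_on_AE_vanish[OF u], of l]
      have "AE y in M. y \<notin> A \<longrightarrow> Tadj l u y = 0"
        by (auto elim: eventually_mono)
      then have "Top d f l (Tadj l u) \<in> L2_on M A"
        using Tadj_L2[OF L2_onD[OF u]] by (intro Top_inv l L2_onI)
      moreover have "AE x in M. Top d f l (Tadj l u) x = u x"
        using Top_Tadj_AE[of l u] L2_on_AE_vanish[OF u]
        by eventually_elim (auto simp: indicator_def)
      ultimately show "u \<in> L2_on M A"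
        by (rule L2_on_AE_eq[OF _ L2_onD[OF u]])
    qed
  qed measurable
  then have "(\<Union>l\<in>{l. d l = n}. (shift n -` A \<inter> space M) \<inter> W l - A) \<in> null_sets M"
    using countable_subset[OF subset_UNIV countable_morphisms] by (intro null_sets_UN') auto
  from null_sets.Un[OF this ranges_cover[of n]] show ?thesis
    by (rule null_sets_subset) auto
qed

lemma Tadj_invariant_imp_diff_shift_preimage_null:
  assumes A[measurable]: "A \<in> sets M"
    and Tadj_inv: "\<And>l g. d l = n \<Longrightarrow> g \<in> L2_on M A \<Longrightarrow> Tadj l g \<in> L2_on M A"
  shows "A - (shift n -` A \<inter> space M) \<in> null_sets M"
proof -
  have "tau l ` (tau l -` A \<inter> D l - A) \<in> null_sets M" if l: "d l = n" for l
  proof (rule prefix_image_null)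
    show "tau l -` A \<inter> D l - A \<in> null_sets M"
    proof (rule null_diff_if_L2_on_subset)
      show "L2_on M (tau l -` A \<inter> D l) \<subseteq> L2_on M A"
      proof
        fix u assume u: "u \<in> L2_on M (tau l -` A \<inter> D l)"
        from Top_AE_support[OF L2_on_AE_vanish[OF u], of l]
        have "AE x in M. x \<notin> A \<longrightarrow> Top d f l u x = 0"
          by (rule eventually_mono) (use shift_prefix_range in fastforce)
        then have "Tadj l (Top d f l u) \<in> L2_on M A"
          using Top_L2[OF L2_onD[OF u]] by (intro Tadj_inv l L2_onI)
        moreover have "AE x in M. Tadj l (Top d f l u) x = u x"
          using Tadj_Top_AE[of l u] L2_on_AE_vanish[OF u]
          by eventually_elim (auto simp: indicator_def)
        ultimately show "u \<in> L2_on M A"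
          by (rule L2_on_AE_eq[OF _ L2_onD[OF u]])
      qed
    qed (auto intro: prefix_preimage_sets)
  qed auto
  then have "(\<Union>l\<in>{l. d l = n}. tau l ` (tau l -` A \<inter> D l - A)) \<in> null_sets M"
    using countable_subset[OF subset_UNIV countable_morphisms] by (intro null_sets_UN') auto
  from null_sets.Un[OF this ranges_cover[of n]] show ?thesis
  proof (rule null_sets_subset)
    show "A - (shift n -` A \<inter> space M) \<subseteq>
        (\<Union>l\<in>{l. d l = n}. tau l ` (tau l -` A \<inter> D l - A)) \<union> (space M - (\<Union>l\<in>{l. d l = n}. W l))"
      using sets.sets_into_space[OF A] shift_prefix by fastforce
  qed measurable
qed

lemma invariant_closed_subspace_indicator_mult:
  assumes V: "closed_subspace M V"
    and Top_inv: "\<And>l g. g \<in> V \<Longrightarrow> Top d f l g \<in> V" and Tadj_inv: "\<And>l g. g \<in> V \<Longrightarrow> Tadj l g \<in> V"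
    and "A \<in> sets M" "g \<in> V"
  shows "(\<lambda>x. indicator A x * g x) \<in> V"
proof (rule closed_subspace_indicator_mult_generated[OF V _ _ assms(4,5)])
  show "sets M = sigma_sets (space M) (range Z)"
    using sets_M space_M by simp
  fix Z' g assume "Z' \<in> range Z" and g: "g \<in> V"
  then obtain l where Z': "Z' = Z l" by blast
  have "AE x in M. Top d f l (Tadj l g) x = indicator (Z l) x * g x"
    using Top_Tadj_AE[of l g] AE_not_in[OF cyl_diff_range_null[of l]]
    by eventually_elim (auto simp: indicator_def prefix_in_cyl)
  then show "(\<lambda>x. indicator Z' x * g x) \<in> V"
    unfolding Z' using L2_indicator_mult[OF closed_subspace_L2[OF V g]]
    by (intro closed_subspace_AE_cong[OF V Top_inv[OF Tadj_inv[OF g]], rotated]) auto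
qed

lemma Tadj_mem_adj_invariant:
  assumes E: "mu_invariant M E" and V: "closed_subspace M V" "V \<subseteq> L2_on M E"
    and adj_inv: "adj_invariant M (L2_on M E) (Top d f l) V" and g: "g \<in> V"
  shows "Tadj l g \<in> V"
proof (rule adj_invariant_adjoint_mem[OF adj_inv V _ L2_on_diff _ g])
  show "L2_on M E \<subseteq> L2 M"
    by (auto dest: L2_onD)
  show "l2inner M (Top d f l u) g = l2inner M u (Tadj l g)" if "u \<in> L2_on M E" for u
    using that g V(2) by (intro l2inner_Top_Tadj) (auto dest!: L2_onD intro: L2_measurable)
  show "Tadj l g \<in> L2_on M E"
    using Tadj_L2_on[OF mu_invariant_null_diff(1)[OF E]] g V(2) by blast
qed

lemma minimal_invariant_irreducible:
  assumes minE: "minimal_mu_invariant M E" and V: "closed_subspace M V" and VE: "V \<subseteq> L2_on M E"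
    and Top_inv: "\<And>l g. g \<in> V \<Longrightarrow> Top d f l g \<in> V"
    and adj_inv: "\<And>l. adj_invariant M (L2_on M E) (Top d f l) V"
  shows "(\<forall>g\<in>V. AE x in M. g x = 0) \<or> V = L2_on M E"
proof -
  have E: "mu_invariant M E"
    using minE unfolding minimal_mu_invariant_def by blast
  then have [measurable]: "E \<in> sets M"
    unfolding mu_invariant_def by blast
  have Tadj_inv: "Tadj l g \<in> V" if "g \<in> V" for l g
    using E V VE adj_inv that by (rule Tadj_mem_adj_invariant)
  obtain F where [measurable]: "F \<in> sets M" and V_F: "V = L2_on M F"
    using closed_subspace_eq_L2_on[OF V invariant_closed_subspace_indicator_mult[OF V Top_inv Tadj_inv]] by blast
  have "F - E \<in> null_sets M"
    using VE V_F by (intro null_diff_if_L2_on_subset) auto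
  then have V_FE: "V = L2_on M (F \<inter> E)"
    unfolding V_F by (intro L2_on_AE_cong) (auto dest: AE_not_in elim: eventually_mono)
  show ?thesis
  proof (cases "F \<inter> E \<in> null_sets M")
    case True
    then show ?thesis
      using AE_not_in[OF True] unfolding V_FE L2_on_def by (auto elim: eventually_elim2)
  next
    case False
    have "(shift n -` (F \<inter> E) \<inter> space M) - F \<inter> E \<in> null_sets M" for n
      by (rule Top_invariant_imp_shift_preimage_diff_null) (use Top_inv V_FE in auto)
    moreover have "F \<inter> E - (shift n -` (F \<inter> E) \<inter> space M) \<in> null_sets M" for n
      by (rule Tadj_invariant_imp_diff_shift_preimage_null) (use Tadj_inv V_FE in auto)
    ultimately have "mu_invariant M (F \<inter> E)"
      using False unfolding mu_invariant_def by (auto intro: null_setsD1 null_sets.Un)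
    then have "(F \<inter> E - E) \<union> (E - F \<inter> E) \<in> null_sets M"
      using minE unfolding minimal_mu_invariant_def by (auto intro: null_setsI)
    then have "L2_on M (F \<inter> E) = L2_on M E"
      by (intro L2_on_AE_cong) (auto dest: AE_not_in elim: eventually_mono)
    then show ?thesis
      using V_FE by simp
  qed
qed

end

theorem theorem4p20:
  fixes d :: "'p \<Rightarrow> ('k::finite \<Rightarrow> nat)"
    and r s :: "'p \<Rightarrow> 'p"
    and cmp :: "'p \<Rightarrow> 'p \<Rightarrow> 'p"
    and M :: "(('k \<Rightarrow> nat) \<Rightarrow> ('k \<Rightarrow> nat) \<Rightarrow> 'p) measure"
    and f :: "'p \<Rightarrow> (('k \<Rightarrow> nat) \<Rightarrow> ('k \<Rightarrow> nat) \<Rightarrow> 'p) \<Rightarrow> complex"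
    and E :: "(('k \<Rightarrow> nat) \<Rightarrow> ('k \<Rightarrow> nat) \<Rightarrow> 'p) set"
  assumes kg: "kgraph d r s cmp"
    and rf: "row_finite d r"
    and sf: "source_free d r"
    and ns: "no_sinks d s"
    and space_M: "space M = infpaths d r s cmp"
    and sets_M: "sets M = sigma_sets (infpaths d r s cmp) (range (cyl d r s cmp))"
    and radon: "\<forall>l. emeasure M (cyl d r s cmp l) < \<infinity>"
    and proj: "projective_system d r s cmp M f"
    and minE: "minimal_mu_invariant M E"
  shows "(\<forall>l. (\<forall>g\<in>L2_on M E. Top d f l g \<in> L2_on M E)
              \<and> adj_invariant M (L2 M) (Top d f l) (L2_on M E))
       \<and> (\<exists>g\<in>L2_on M E. \<not> (AE x in M. g x = 0))
       \<and> (\<forall>V. closed_subspace M V \<and> V \<subseteq> L2_on M E \<and>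
              (\<forall>l. (\<forall>g\<in>V. Top d f l g \<in> V) \<and> adj_invariant M (L2_on M E) (Top d f l) V)
              \<longrightarrow> (\<forall>g\<in>V. AE x in M. g x = 0) \<or> V = L2_on M E)"
proof -
  interpret kgraph_projective_system d r s cmp M f
    using kg space_M sets_M radon proj by unfold_locales auto
  have E: "mu_invariant M E"
    using minE unfolding minimal_mu_invariant_def by blast
  have "adj_invariant M (L2 M) (Top d f l) (L2_on M E)" for l
    unfolding adj_invariant_def
    using Tadj_L2_on[OF mu_invariant_null_diff(1)[OF E]]
    by (blast intro: l2inner_Top_Tadj L2_measurable L2_onD)
  moreover have "\<exists>g\<in>L2_on M E. \<not> (AE x in M. g x = 0)"
    using E unfolding mu_invariant_def by (intro L2_on_nontrivial) auto
  ultimately show ?thesis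
    using Top_L2_on[OF mu_invariant_null_diff(2)[OF E]] minimal_invariant_irreducible[OF minE]
    by blast
qed

end
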